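(* If $A\| B$ is a left D2 algebra extension, then the extension $\lambda:A\to E:=\mathrm{End}(A_B)$ is left D2 and left balanced, and it is a left $S_{\mathrm{cop}}$-Galois extension of $\lambda(A)$ with respect to the coaction $\delta_L(g)=\sum_i\beta_i\otimes_{R^{\mathrm{op}}}\big(x\mapsto g(xt_i^1)t_i^2\big)$, $g\in E$, where $\beta_i\in S$, $t_i\in T$ is a left D2 quasibase of $A\| B$.
   Context: Algebras over a commutative ring $K$; an algebra extension $C\| D$ is a unit-preserving homomorphism $D\to C$. For $A\| B$: $R=A^B$ the centralizer, $S=\mathrm{End}({}_BA_B)$, $T=(A\otimes_BA)^B$ with Sweedler notation $t=t^1\otimes t^2$; $\lambda(a)(x)=ax$. $C\| D$ is left D2 if $C\otimes_DC$ is isomorphic as a $D$-$C$-bimodule to a direct summand of a finite direct sum $C^n$; a left D2 quasibase of $A\| B$ is a finite family $\beta_i\in S,t_i\in T$ with $a\otimes_Ba'=\sum_it_i^1\otimes t_i^2\beta_i(a)a'$. $C\| D$ is left balanced if every additive map $C\to C$ commuting with all elements of $\mathrm{End}({}_DC)$ is left multiplication by an element of the image of $D$. $S$ is a left $R$-bialgebroid with source $\lambda|_R$, target $\rho|_R$ ($\rho(r)(x)=xr$), counit $\alpha\mapsto\alpha(1)$ and comultiplication $\Delta(\alpha)=\sum_i\alpha(-t_i^1)t_i^2\otimes_R\beta_i$; its co-opposite $S_{\mathrm{cop}}$ is the left $R^{\mathrm{op}}$-bialgebroid with the same algebra, source and target exchanged and comultiplication $\Delta^{\mathrm{op}}$.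 For a left bialgebroid $S'$ over $R'$ with target $\tilde t$, a left $S'$-comodule algebra is an algebra $C$ with a homomorphism $R'\to C$ and a coassociative counital coaction $\delta:C\to S'\otimes_{R'}C$, $\delta(c)=c_{(-1)}\otimes c_{(0)}$, with $\delta(1)=1\otimes1$, $c_{(-1)}\tilde t(r)\otimes c_{(0)}=c_{(-1)}\otimes c_{(0)}r$, $\delta(cc')=\delta(c)\delta(c')$; it is left $S'$-Galois over its coinvariants $D=\{c:\delta(c)=1\otimes c\}$ if $c\otimes_Dc'\mapsto c_{(-1)}\otimes c_{(0)}c'$ is bijective. *)

theory Defs
  imports Main "HOL-Library.Function_Algebras"
begin

text \<open>An element of M \<otimes>_D N is represented by a finite list of pairs (m,n), standing for
  the formal sum of the simple tensors m \<otimes> n.  The free abelian group on M \<times> N is modelled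
  by finitely supported functions M \<times> N \<Rightarrow> int; two lists represent the same tensor iff the
  difference of their formal sums lies in the subgroup generated by the defining relations
  (biadditivity and D-balancing).\<close>

definition gen :: "'x \<Rightarrow> ('x \<Rightarrow> int)" where
  "gen p = (\<lambda>q. if q = p then 1 else 0)"

definition fsum :: "'x list \<Rightarrow> ('x \<Rightarrow> int)" where
  "fsum xs = sum_list (map gen xs)"

inductive_set zspan :: "('x \<Rightarrow> int) set \<Rightarrow> ('x \<Rightarrow> int) set" for X where
  zero: "0 \<in> zspan X"
| gen: "x \<in> X \<Longrightarrow> x \<in> zspan X"
| diff: "x \<in> zspan X \<Longrightarrow> y \<in> zspan X \<Longrightarrow> x - y \<in> zspan X"

definition tensor_rels ::
  "'m::plus set \<Rightarrow> 'n::plus set \<Rightarrow> 'd set \<Rightarrow> ('m \<Rightarrow> 'd \<Rightarrow> 'm) \<Rightarrow> ('d \<Rightarrow> 'n \<Rightarrow> 'n)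
   \<Rightarrow> ('m \<times> 'n \<Rightarrow> int) set" where
  "tensor_rels M N D ract lact =
     {gen (m + m', n) - gen (m, n) - gen (m', n) | m m' n. m \<in> M \<and> m' \<in> M \<and> n \<in> N}
   \<union> {gen (m, n + n') - gen (m, n) - gen (m, n') | m n n'. m \<in> M \<and> n \<in> N \<and> n' \<in> N}
   \<union> {gen (ract m d, n) - gen (m, lact d n) | m n d. m \<in> M \<and> n \<in> N \<and> d \<in> D}"

definition teq ::
  "'m::plus set \<Rightarrow> 'n::plus set \<Rightarrow> 'd set \<Rightarrow> ('m \<Rightarrow> 'd \<Rightarrow> 'm) \<Rightarrow> ('d \<Rightarrow> 'n \<Rightarrow> 'n)
   \<Rightarrow> ('m \<times> 'n) list \<Rightarrow> ('m \<times> 'n) list \<Rightarrow> bool" where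
  "teq M N D ract lact xs ys \<longleftrightarrow>
     set xs \<subseteq> M \<times> N \<and> set ys \<subseteq> M \<times> N \<and>
     fsum xs - fsum ys \<in> zspan (tensor_rels M N D ract lact)"

text \<open>Threefold tensor product M1 \<otimes>_D M2 \<otimes>_D M3 (canonically isomorphic to both bracketings).\<close>
definition tensor3_rels ::
  "'m1::plus set \<Rightarrow> 'm2::plus set \<Rightarrow> 'm3::plus set \<Rightarrow> 'd set
   \<Rightarrow> ('m1 \<Rightarrow> 'd \<Rightarrow> 'm1) \<Rightarrow> ('d \<Rightarrow> 'm2 \<Rightarrow> 'm2) \<Rightarrow> ('m2 \<Rightarrow> 'd \<Rightarrow> 'm2) \<Rightarrow> ('d \<Rightarrow> 'm3 \<Rightarrow> 'm3)
   \<Rightarrow> ('m1 \<times> 'm2 \<times> 'm3 \<Rightarrow> int) set" where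
  "tensor3_rels M1 M2 M3 D r1 l2 r2 l3 =
     {gen (a + a', b, c) - gen (a, b, c) - gen (a', b, c) | a a' b c.
        a \<in> M1 \<and> a' \<in> M1 \<and> b \<in> M2 \<and> c \<in> M3}
   \<union> {gen (a, b + b', c) - gen (a, b, c) - gen (a, b', c) | a b b' c.
        a \<in> M1 \<and> b \<in> M2 \<and> b' \<in> M2 \<and> c \<in> M3}
   \<union> {gen (a, b, c + c') - gen (a, b, c) - gen (a, b, c') | a b c c'.
        a \<in> M1 \<and> b \<in> M2 \<and> c \<in> M3 \<and> c' \<in> M3}
   \<union> {gen (r1 a d, b, c) - gen (a, l2 d b, c) | a b c d. a \<in> M1 \<and> b \<in> M2 \<and> c \<in> M3 \<and> d \<in> D}
   \<union> {gen (a, r2 b d, c) - gen (a, b, l3 d c) | a b c d. a \<in> M1 \<and> b \<in> M2 \<and> c \<in> M3 \<and> d \<in> D}"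

definition teq3 ::
  "'m1::plus set \<Rightarrow> 'm2::plus set \<Rightarrow> 'm3::plus set \<Rightarrow> 'd set
   \<Rightarrow> ('m1 \<Rightarrow> 'd \<Rightarrow> 'm1) \<Rightarrow> ('d \<Rightarrow> 'm2 \<Rightarrow> 'm2) \<Rightarrow> ('m2 \<Rightarrow> 'd \<Rightarrow> 'm2) \<Rightarrow> ('d \<Rightarrow> 'm3 \<Rightarrow> 'm3)
   \<Rightarrow> ('m1 \<times> 'm2 \<times> 'm3) list \<Rightarrow> ('m1 \<times> 'm2 \<times> 'm3) list \<Rightarrow> bool" where
  "teq3 M1 M2 M3 D r1 l2 r2 l3 xs ys \<longleftrightarrow>
     set xs \<subseteq> M1 \<times> M2 \<times> M3 \<and> set ys \<subseteq> M1 \<times> M2 \<times> M3 \<and>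
     fsum xs - fsum ys \<in> zspan (tensor3_rels M1 M2 M3 D r1 l2 r2 l3)"

section \<open>Algebra extensions C | D (C given by a carrier, product and the image D of D \<rightarrow> C)\<close>

definition unital_hom :: "('r::ring_1 \<Rightarrow> 's::ring_1) \<Rightarrow> bool" where
  "unital_hom f \<longleftrightarrow> f 1 = 1 \<and> (\<forall>x y. f (x + y) = f x + f y) \<and> (\<forall>x y. f (x * y) = f x * f y)"

definition alg_struct :: "('k::comm_ring_1 \<Rightarrow> 'a::ring_1) \<Rightarrow> bool" where
  "alg_struct u \<longleftrightarrow> unital_hom u \<and> (\<forall>k x. u k * x = x * u k)"

definition Cpow :: "'c::zero set \<Rightarrow> nat \<Rightarrow> (nat \<Rightarrow> 'c) set" where
  "Cpow C n = {v. (\<forall>i<n. v i \<in> C) \<and> (\<forall>i\<ge>n. v i = 0)}"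

text \<open>Left D2: C \<otimes>_D C is D-C-bimodule isomorphic to a direct summand of C^n, i.e. there are
  D-C-bimodule maps f : C \<otimes>_D C \<rightarrow> C^n and g : C^n \<rightarrow> C \<otimes>_D C with g \<circ> f = id.\<close>
definition left_D2 :: "'c::ab_group_add set \<Rightarrow> ('c \<Rightarrow> 'c \<Rightarrow> 'c) \<Rightarrow> 'c set \<Rightarrow> bool" where
  "left_D2 C mul D \<longleftrightarrow> (\<exists>(n::nat) f g.
     (\<forall>xs\<in>lists (C \<times> C). f xs \<in> Cpow C n) \<and>
     (\<forall>xs\<in>lists (C \<times> C). \<forall>ys\<in>lists (C \<times> C). teq C C D mul mul xs ys \<longrightarrow> f xs = f ys) \<and>
     (\<forall>xs\<in>lists (C \<times> C). \<forall>ys\<in>lists (C \<times> C). f (xs @ ys) = f xs + f ys) \<and>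
     (\<forall>xs\<in>lists (C \<times> C). \<forall>d\<in>D. \<forall>i<n.
         f (map (\<lambda>(x, y). (mul d x, y)) xs) i = mul d (f xs i)) \<and>
     (\<forall>xs\<in>lists (C \<times> C). \<forall>c\<in>C. \<forall>i<n.
         f (map (\<lambda>(x, y). (x, mul y c)) xs) i = mul (f xs i) c) \<and>
     (\<forall>v\<in>Cpow C n. g v \<in> lists (C \<times> C)) \<and>
     (\<forall>v\<in>Cpow C n. \<forall>w\<in>Cpow C n. teq C C D mul mul (g (v + w)) (g v @ g w)) \<and>
     (\<forall>v\<in>Cpow C n. \<forall>d\<in>D.
         teq C C D mul mul (g (\<lambda>i. if i < n then mul d (v i) else 0))
                           (map (\<lambda>(x, y). (mul d x, y)) (g v))) \<and>
     (\<forall>v\<in>Cpow C n. \<forall>c\<in>C.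
         teq C C D mul mul (g (\<lambda>i. if i < n then mul (v i) c else 0))
                           (map (\<lambda>(x, y). (x, mul y c)) (g v))) \<and>
     (\<forall>xs\<in>lists (C \<times> C). teq C C D mul mul (g (f xs)) xs))"

definition additive_on :: "'c::plus set \<Rightarrow> ('c \<Rightarrow> 'c) \<Rightarrow> bool" where
  "additive_on C \<phi> \<longleftrightarrow> (\<forall>x\<in>C. \<forall>y\<in>C. \<phi> (x + y) = \<phi> x + \<phi> y)"

definition End_left :: "'c::plus set \<Rightarrow> ('c \<Rightarrow> 'c \<Rightarrow> 'c) \<Rightarrow> 'c set \<Rightarrow> ('c \<Rightarrow> 'c) set" where
  "End_left C mul D = {\<psi>. (\<forall>c\<in>C. \<psi> c \<in> C) \<and> additive_on C \<psi> \<and>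
                         (\<forall>d\<in>D. \<forall>c\<in>C. \<psi> (mul d c) = mul d (\<psi> c))}"

definition left_balanced :: "'c::plus set \<Rightarrow> ('c \<Rightarrow> 'c \<Rightarrow> 'c) \<Rightarrow> 'c set \<Rightarrow> bool" where
  "left_balanced C mul D \<longleftrightarrow>
     (\<forall>\<phi>. (\<forall>c\<in>C. \<phi> c \<in> C) \<and> additive_on C \<phi> \<and>
          (\<forall>\<psi>\<in>End_left C mul D. \<forall>c\<in>C. \<phi> (\<psi> c) = \<psi> (\<phi> c))
        \<longrightarrow> (\<exists>d\<in>D. \<forall>c\<in>C. \<phi> c = mul d c))"

text \<open>Data of a left bialgebroid H over R': carrier H, product hmul, unit hone, source s, target t,
  comultiplication Delta (an element of H \<otimes>_R' H given by a representing list), counit eps;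
  R' has carrier Rs, product rmul, unit rone.  H \<otimes>_R' X uses the right R'-module structure
  h \<cdot> r = t(r) h on H.  A comodule algebra C comes with eta : R' \<rightarrow> C and coaction delta
  (delta c represents an element of H \<otimes>_R' C, with C a left R'-module via eta).\<close>

definition teqHC where
  "teqHC H hmul t Rs C cmul eta =
     teq H C Rs (\<lambda>h r. hmul (t r) h) (\<lambda>r x. cmul (eta r) x)"

definition left_comodule_algebra ::
  "'h::ab_group_add set \<Rightarrow> ('h \<Rightarrow> 'h \<Rightarrow> 'h) \<Rightarrow> 'h \<Rightarrow> ('r \<Rightarrow> 'h) \<Rightarrow> ('r \<Rightarrow> 'h)
   \<Rightarrow> ('h \<Rightarrow> ('h \<times> 'h) list) \<Rightarrow> ('h \<Rightarrow> 'r)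
   \<Rightarrow> 'r::plus set \<Rightarrow> ('r \<Rightarrow> 'r \<Rightarrow> 'r) \<Rightarrow> 'r
   \<Rightarrow> 'c::ab_group_add set \<Rightarrow> ('c \<Rightarrow> 'c \<Rightarrow> 'c) \<Rightarrow> 'c \<Rightarrow> ('r \<Rightarrow> 'c) \<Rightarrow> ('c \<Rightarrow> ('h \<times> 'c) list)
   \<Rightarrow> bool" where
  "left_comodule_algebra H hmul hone s t Delta eps Rs rmul rone C cmul cone eta delta \<longleftrightarrow>
     (\<forall>r\<in>Rs. eta r \<in> C) \<and> eta rone = cone \<and>
     (\<forall>r\<in>Rs. \<forall>r'\<in>Rs. eta (r + r') = eta r + eta r') \<and>
     (\<forall>r\<in>Rs. \<forall>r'\<in>Rs. eta (rmul r r') = cmul (eta r) (eta r')) \<and>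
     (\<forall>c\<in>C. delta c \<in> lists (H \<times> C)) \<and>
     teqHC H hmul t Rs C cmul eta (delta cone) [(hone, cone)] \<and>
     (\<forall>c\<in>C. \<forall>r\<in>Rs. teqHC H hmul t Rs C cmul eta
         (map (\<lambda>(h, x). (hmul h (t r), x)) (delta c))
         (map (\<lambda>(h, x). (h, cmul x (eta r))) (delta c))) \<and>
     (\<forall>c\<in>C. \<forall>c'\<in>C. teqHC H hmul t Rs C cmul eta
         (delta (cmul c c'))
         (concat (map (\<lambda>(h, x). map (\<lambda>(h', x'). (hmul h h', cmul x x')) (delta c')) (delta c)))) \<and>
     (\<forall>c\<in>C. teq3 H H C Rs (\<lambda>h r. hmul (t r) h) (\<lambda>r h. hmul (s r) h)
                           (\<lambda>h r. hmul (t r) h) (\<lambda>r x. cmul (eta r) x)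
         (concat (map (\<lambda>(h, x). map (\<lambda>(h1, h2). (h1, h2, x)) (Delta h)) (delta c)))
         (concat (map (\<lambda>(h, x). map (\<lambda>(h', x'). (h, h', x')) (delta x)) (delta c)))) \<and>
     (\<forall>c\<in>C. sum_list (map (\<lambda>(h, x). cmul (eta (eps h)) x) (delta c)) = c)"

definition coinvariants where
  "coinvariants H hmul hone t Rs C cmul eta delta =
     {c \<in> C. teqHC H hmul t Rs C cmul eta (delta c) [(hone, c)]}"

text \<open>Galois: the map c \<otimes>_D c' \<mapsto> c_(-1) \<otimes> c_(0) c' from C \<otimes>_D C (D = coinvariants) to
  H \<otimes>_R' C is well defined and bijective.\<close>
definition left_Galois where
  "left_Galois H hmul hone s t Delta eps Rs rmul rone C cmul cone eta delta \<longleftrightarrow>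
     left_comodule_algebra H hmul hone s t Delta eps Rs rmul rone C cmul cone eta delta \<and>
     (let D = coinvariants H hmul hone t Rs C cmul eta delta;
          gal = (\<lambda>xs. concat (map (\<lambda>(c, c'). map (\<lambda>(h, x). (h, cmul x c')) (delta c)) xs))
      in (\<forall>xs\<in>lists (C \<times> C). \<forall>ys\<in>lists (C \<times> C).
             teq C C D cmul cmul xs ys \<longleftrightarrow> teqHC H hmul t Rs C cmul eta (gal xs) (gal ys)) \<and>
         (\<forall>zs\<in>lists (H \<times> C). \<exists>xs\<in>lists (C \<times> C). teqHC H hmul t Rs C cmul eta (gal xs) zs))"

definition teqA :: "('b \<Rightarrow> 'a::ring_1) \<Rightarrow> ('a \<times> 'a) list \<Rightarrow> ('a \<times> 'a) list \<Rightarrow> bool" where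
  "teqA \<iota> = teq UNIV UNIV (range \<iota>) (*) (*)"

definition centralizer :: "('b \<Rightarrow> 'a::ring_1) \<Rightarrow> 'a set" where
  "centralizer \<iota> = {r. \<forall>b. r * \<iota> b = \<iota> b * r}"

definition Smaps :: "('b \<Rightarrow> 'a::ring_1) \<Rightarrow> ('a \<Rightarrow> 'a) set" where
  "Smaps \<iota> = {\<alpha>. (\<forall>x y. \<alpha> (x + y) = \<alpha> x + \<alpha> y) \<and>
               (\<forall>b x. \<alpha> (\<iota> b * x) = \<iota> b * \<alpha> x) \<and> (\<forall>b x. \<alpha> (x * \<iota> b) = \<alpha> x * \<iota> b)}"

definition Emaps :: "('b \<Rightarrow> 'a::ring_1) \<Rightarrow> ('a \<Rightarrow> 'a) set" where
  "Emaps \<iota> = {g. (\<forall>x y. g (x + y) = g x + g y) \<and> (\<forall>b x. g (x * \<iota> b) = g x * \<iota> b)}"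

text \<open>T = (A \<otimes>_B A)^B, elements given by representing lists\<close>
definition Tset :: "('b \<Rightarrow> 'a::ring_1) \<Rightarrow> ('a \<times> 'a) list set" where
  "Tset \<iota> = {ts. \<forall>b. teqA \<iota> (map (\<lambda>(x, y). (\<iota> b * x, y)) ts) (map (\<lambda>(x, y). (x, y * \<iota> b)) ts)}"

definition left_D2_quasibase ::
  "('b \<Rightarrow> 'a::ring_1) \<Rightarrow> nat \<Rightarrow> (nat \<Rightarrow> 'a \<Rightarrow> 'a) \<Rightarrow> (nat \<Rightarrow> ('a \<times> 'a) list) \<Rightarrow> bool" where
  "left_D2_quasibase \<iota> n \<beta> t \<longleftrightarrow>
     (\<forall>i<n. \<beta> i \<in> Smaps \<iota> \<and> t i \<in> Tset \<iota>) \<and>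
     (\<forall>a a'. teqA \<iota> [(a, a')]
        (concat (map (\<lambda>i. map (\<lambda>(x, y). (x, y * (\<beta> i a * a'))) (t i)) [0..<n])))"

definition twist :: "('a::ring_1 \<Rightarrow> 'a) \<Rightarrow> ('a \<times> 'a) list \<Rightarrow> 'a \<Rightarrow> 'a" where
  "twist f ts = (\<lambda>x. sum_list (map (\<lambda>(y, z). f (x * y) * z) ts))"

definition Delta_cop :: "nat \<Rightarrow> (nat \<Rightarrow> 'a \<Rightarrow> 'a) \<Rightarrow> (nat \<Rightarrow> ('a::ring_1 \<times> 'a) list)
    \<Rightarrow> ('a \<Rightarrow> 'a) \<Rightarrow> (('a \<Rightarrow> 'a) \<times> ('a \<Rightarrow> 'a)) list" where
  "Delta_cop n \<beta> t \<alpha> = map (\<lambda>i. (\<beta> i, twist \<alpha> (t i))) [0..<n]"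

definition deltaL :: "nat \<Rightarrow> (nat \<Rightarrow> 'a \<Rightarrow> 'a) \<Rightarrow> (nat \<Rightarrow> ('a::ring_1 \<times> 'a) list)
    \<Rightarrow> ('a \<Rightarrow> 'a) \<Rightarrow> (('a \<Rightarrow> 'a) \<times> ('a \<Rightarrow> 'a)) list" where
  "deltaL n \<beta> t g = map (\<lambda>i. (\<beta> i, twist g (t i))) [0..<n]"

definition lam :: "'a::ring_1 \<Rightarrow> 'a \<Rightarrow> 'a" where "lam a = (\<lambda>x. a * x)"
definition rho :: "'a::ring_1 \<Rightarrow> 'a \<Rightarrow> 'a" where "rho a = (\<lambda>x. x * a)"

end

theory Submission
  imports Defs "HOL-Library.Multiset"
begin

text \<open>
  A left D2 quasibase expands every simple tensor of A \<otimes>_B A as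
  a \<otimes> a' = \<Sum>_i t_i^1 \<otimes> t_i^2 \<beta>_i(a) a'.
  Hence a right B-linear map F from A \<otimes>_B A to A is determined by the values F(x, t_i^1), and the
  maps f \<otimes> g \<mapsto> ((x, y) \<mapsto> f(g(x) y)) on E \<otimes>_A E and \<alpha> \<otimes> g \<mapsto> ((x, y) \<mapsto> g(x) \<alpha>(y)) on
  S \<otimes>_R E are bijections onto such maps (likewise for S \<otimes>_R S \<otimes>_R E and trilinear maps): by the
  defining relations, every element of the tensor product can be rewritten into a normal form
  that depends only on its image.  Through these identifications the Galois map becomes the
  identity, each comodule algebra axiom becomes an identity of maps on A \<otimes>_B A, the coinvariants
  are the g with g(x y) = g(x) y, that is \<lambda>(A), and E \<otimes>_A E is a retract of E^n via
  F \<mapsto> (F(-, t_i^1) t_i^2)_i.  Left balancedness needs no quasibase: a map \<phi> commuting with every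
  e \<mapsto> \<lambda>(e(1)) \<circ> c sends c to \<lambda>(\<phi>(id)(1)) \<circ> c.
\<close>

lemma sum_list_apply: "(\<Sum>x\<leftarrow>xs. f x) a = (\<Sum>x\<leftarrow>xs. f x a)"
  by (induct xs) auto

lemma sum_list_map_concat: "(\<Sum>x\<leftarrow>concat xss. f x) = (\<Sum>xs\<leftarrow>xss. \<Sum>x\<leftarrow>xs. f x)"
  by (induct xss) auto

lemma sum_list_upt_cong: "(\<And>i. i < n \<Longrightarrow> f i = g i) \<Longrightarrow> (\<Sum>i\<leftarrow>[0..<n]. f i) = (\<Sum>i\<leftarrow>[0..<n]. g i)"
  by (intro arg_cong[where f = sum_list] map_cong) auto

lemma sum_list_swap:
  "(\<Sum>x\<leftarrow>xs. \<Sum>y\<leftarrow>ys. f x y) = (\<Sum>y\<leftarrow>ys. \<Sum>x\<leftarrow>xs. (f x y :: 'g::comm_monoid_add))"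
  by (induct xs) (auto simp: sum_list_addf)

lemma additive_sum_list:
  fixes g :: "'x::monoid_add \<Rightarrow> 'g::group_add"
  assumes "\<And>x y. g (x + y) = g x + g y"
  shows "g (\<Sum>x\<leftarrow>xs. f x) = (\<Sum>x\<leftarrow>xs. g (f x))"
proof -
  have "g 0 + g 0 = g 0 + 0"
    using assms[of 0 0] by simp
  then have "g 0 = 0"
    by (rule add_left_imp_eq)
  then show ?thesis by (induct xs) (auto simp: assms)
qed

section \<open>Formal sums modulo relations\<close>

lemma fsum_Nil [simp]: "fsum [] = 0"
  and fsum_Cons [simp]: "fsum (x # xs) = gen x + fsum xs"
  and fsum_append [simp]: "fsum (xs @ ys) = fsum xs + fsum ys"
  by (simp_all add: fsum_def)

lemma fsum_eq_count_mset: "fsum xs = (\<lambda>p. int (count (mset xs) p))"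
  by (induct xs) (auto simp: gen_def fun_eq_iff)

lemma sum_list_map_eq_if_fsum_eq:
  fixes F :: "'x \<Rightarrow> 'g::comm_monoid_add"
  assumes "fsum xs = fsum ys"
  shows "sum_list (map F xs) = sum_list (map F ys)"
proof -
  have "mset xs = mset ys"
    using assms by (simp add: fsum_eq_count_mset fun_eq_iff multiset_eqI)
  then show ?thesis
    using sum_mset_sum_list[of "map F xs"] sum_mset_sum_list[of "map F ys"] by simp
qed

lemma zspan_uminus: "x \<in> zspan X \<Longrightarrow> - x \<in> zspan X"
  using zspan.diff[OF zspan.zero, of x] by simp

lemma zspan_add: "x \<in> zspan X \<Longrightarrow> y \<in> zspan X \<Longrightarrow> x + y \<in> zspan X"
  using zspan.diff[of x X "- y"] zspan_uminus[of y] by simp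

lemma zspan_sum_list_invariant:
  fixes F :: "'x \<Rightarrow> 'g::ab_group_add"
  assumes rel: "\<And>\<phi>. \<phi> \<in> Rl \<Longrightarrow>
      \<exists>as bs. \<phi> = fsum as - fsum bs \<and> sum_list (map F as) = sum_list (map F bs)"
    and "\<phi> \<in> zspan Rl"
  shows "\<exists>as bs. \<phi> = fsum as - fsum bs \<and> sum_list (map F as) = sum_list (map F bs)"
  using assms(2)
proof induct
  case zero
  show ?case by (rule exI[of _ "[]"], rule exI[of _ "[]"]) simp
next
  case (gen \<phi>)
  then show ?case by (rule rel)
next
  case (diff \<phi> \<psi>)
  then obtain as bs cs ds where \<phi>: "\<phi> = fsum as - fsum bs" "sum_list (map F as) = sum_list (map F bs)"
    and \<psi>: "\<psi> = fsum cs - fsum ds" "sum_list (map F cs) = sum_list (map F ds)"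
    by blast
  have "\<phi> - \<psi> = fsum (as @ ds) - fsum (bs @ cs)"
    using \<phi>(1) \<psi>(1) by (simp add: fun_eq_iff)
  moreover have "sum_list (map F (as @ ds)) = sum_list (map F (bs @ cs))"
    using \<phi>(2) \<psi>(2) by (simp add: add.commute)
  ultimately show ?case by blast
qed

definition fsum_equiv :: "'x set \<Rightarrow> ('x \<Rightarrow> int) set \<Rightarrow> 'x list \<Rightarrow> 'x list \<Rightarrow> bool" where
  "fsum_equiv X Rl xs ys \<longleftrightarrow> set xs \<subseteq> X \<and> set ys \<subseteq> X \<and> fsum xs - fsum ys \<in> zspan Rl"

lemma teq_eq_fsum_equiv: "teq M N D r l = fsum_equiv (M \<times> N) (tensor_rels M N D r l)"
  by (simp add: fun_eq_iff teq_def fsum_equiv_def)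

lemma teq3_eq_fsum_equiv:
  "teq3 M1 M2 M3 D r1 l2 r2 l3 = fsum_equiv (M1 \<times> M2 \<times> M3) (tensor3_rels M1 M2 M3 D r1 l2 r2 l3)"
  by (simp add: fun_eq_iff teq3_def fsum_equiv_def)

lemma fsum_equiv_sum_list_eq:
  fixes F :: "'x \<Rightarrow> 'g::ab_group_add"
  assumes "fsum_equiv X Rl xs ys"
    and "\<And>\<phi>. \<phi> \<in> Rl \<Longrightarrow>
      \<exists>as bs. \<phi> = fsum as - fsum bs \<and> sum_list (map F as) = sum_list (map F bs)"
  shows "sum_list (map F xs) = sum_list (map F ys)"
proof -
  have "fsum xs - fsum ys \<in> zspan Rl"
    using assms(1) by (simp add: fsum_equiv_def)
  from zspan_sum_list_invariant[OF assms(2) this] obtain as bs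
    where "fsum xs - fsum ys = fsum as - fsum bs"
      and F_as_bs: "sum_list (map F as) = sum_list (map F bs)"
    by blast
  then have "fsum (xs @ bs) = fsum (ys @ as)"
    by (simp add: fun_eq_iff algebra_simps)
  then have "sum_list (map F (xs @ bs)) = sum_list (map F (ys @ as))"
    by (rule sum_list_map_eq_if_fsum_eq)
  then show ?thesis using F_as_bs by simp
qed

lemma fsum_equiv_refl: "set xs \<subseteq> X \<Longrightarrow> fsum_equiv X Rl xs xs"
  by (simp add: fsum_equiv_def zspan.zero)

lemma fsum_equiv_sym: "fsum_equiv X Rl xs ys \<Longrightarrow> fsum_equiv X Rl ys xs"
  unfolding fsum_equiv_def using zspan_uminus[of "fsum xs - fsum ys" Rl] by auto

lemma fsum_equiv_trans [trans]:
  "fsum_equiv X Rl xs ys \<Longrightarrow> fsum_equiv X Rl ys zs \<Longrightarrow> fsum_equiv X Rl xs zs"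
  unfolding fsum_equiv_def using zspan_add[of "fsum xs - fsum ys" Rl "fsum ys - fsum zs"] by auto

lemma fsum_equiv_by_fsum_eq:
  "set xs \<subseteq> X \<Longrightarrow> set ys \<subseteq> X \<Longrightarrow> fsum xs = fsum ys \<Longrightarrow> fsum_equiv X Rl xs ys"
  by (simp add: fsum_equiv_def zspan.zero)

lemma fsum_equiv_append:
  "fsum_equiv X Rl xs xs' \<Longrightarrow> fsum_equiv X Rl ys ys' \<Longrightarrow> fsum_equiv X Rl (xs @ ys) (xs' @ ys')"
  unfolding fsum_equiv_def using zspan_add[of "fsum xs - fsum xs'" Rl "fsum ys - fsum ys'"]
  by (auto simp: algebra_simps)

lemma fsum_equiv_concat:
  "(\<And>i. i \<in> set I \<Longrightarrow> fsum_equiv X Rl (f i) (g i)) \<Longrightarrow>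
   fsum_equiv X Rl (concat (map f I)) (concat (map g I))"
  by (induct I) (simp_all add: fsum_equiv_refl fsum_equiv_append)

lemma fsum_equiv_map:
  "(\<And>i. i \<in> set I \<Longrightarrow> fsum_equiv X Rl [f i] [g i]) \<Longrightarrow> fsum_equiv X Rl (map f I) (map g I)"
  using fsum_equiv_concat[of I X Rl "\<lambda>i. [f i]" "\<lambda>i. [g i]"] by simp

lemma fsum_equiv_map_concat:
  "(\<And>i. i \<in> set I \<Longrightarrow> fsum_equiv X Rl [f i] (g i)) \<Longrightarrow> fsum_equiv X Rl (map f I) (concat (map g I))"
  using fsum_equiv_concat[of I X Rl "\<lambda>i. [f i]" g] by simp

lemma fsum_equiv_by_rel2:
  "gen a - gen b \<in> Rl \<Longrightarrow> a \<in> X \<Longrightarrow> b \<in> X \<Longrightarrow> fsum_equiv X Rl [a] [b]"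
  by (simp add: fsum_equiv_def zspan.gen)

lemma fsum_equiv_by_rel3:
  "gen a - gen b - gen c \<in> Rl \<Longrightarrow> a \<in> X \<Longrightarrow> b \<in> X \<Longrightarrow> c \<in> X \<Longrightarrow> fsum_equiv X Rl [a] [b, c]"
  using zspan.gen[of "gen a - gen b - gen c" Rl] by (simp add: fsum_equiv_def algebra_simps)

lemma fsum_equiv_cancel_double: "fsum_equiv X Rl [x] [x, x] \<Longrightarrow> fsum_equiv X Rl [x] []"
  unfolding fsum_equiv_def using zspan_uminus[of "gen x - (gen x + gen x)" Rl] by simp

definition fsum_additive_on ::
  "'x set \<Rightarrow> ('x \<Rightarrow> int) set \<Rightarrow> 'v::monoid_add set \<Rightarrow> ('v \<Rightarrow> 'x) \<Rightarrow> bool" where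
  "fsum_additive_on X Rl V P \<longleftrightarrow>
     0 \<in> V \<and> (\<forall>u\<in>V. \<forall>v\<in>V. u + v \<in> V \<and> fsum_equiv X Rl [P (u + v)] [P u, P v])"

lemma fsum_additive_onD:
  assumes "fsum_additive_on X Rl V P"
  shows fsum_additive_on_zero: "0 \<in> V"
    and fsum_additive_on_add: "u \<in> V \<Longrightarrow> v \<in> V \<Longrightarrow> u + v \<in> V"
    and fsum_additive_on_equiv: "u \<in> V \<Longrightarrow> v \<in> V \<Longrightarrow> fsum_equiv X Rl [P (u + v)] [P u, P v]"
  using assms by (auto simp: fsum_additive_on_def)

lemma fsum_additive_on_mem:
  assumes "fsum_additive_on X Rl V P" and "u \<in> V"
  shows "P u \<in> X"
  using fsum_additive_on_equiv[OF assms fsum_additive_on_zero[OF assms(1)]]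
  by (simp add: fsum_equiv_def)

lemma sum_list_in_additive_set:
  assumes "fsum_additive_on X Rl V P"
  shows "set us \<subseteq> V \<Longrightarrow> sum_list us \<in> V"
  by (induct us) (simp_all add: fsum_additive_onD[OF assms])

lemma fsum_equiv_sum_list:
  assumes P: "fsum_additive_on X Rl V P" and us: "set us \<subseteq> V"
  shows "fsum_equiv X Rl [P (sum_list us)] (map P us)"
  using us
proof (induct us)
  case Nil
  show ?case
    using fsum_additive_on_equiv[OF P, of 0 0] fsum_additive_on_zero[OF P]
    by (simp add: fsum_equiv_cancel_double)
next
  case (Cons u us)
  have "fsum_equiv X Rl [P (u + sum_list us)] ([P u] @ [P (sum_list us)])"
    using Cons.prems by (simp add: fsum_additive_onD[OF P] sum_list_in_additive_set[OF P])
  also have "fsum_equiv X Rl ([P u] @ [P (sum_list us)]) ([P u] @ map P us)"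
    using Cons by (intro fsum_equiv_append fsum_equiv_refl) (simp_all add: fsum_additive_on_mem[OF P])
  finally show ?case by simp
qed

lemma fsum_equiv_expand:
  assumes P: "fsum_additive_on X Rl V P" and w: "\<And>i. i \<in> set I \<Longrightarrow> w i \<in> V"
    and PQ: "\<And>i. i \<in> set I \<Longrightarrow> fsum_equiv X Rl [P (w i)] [Q i]"
  shows "fsum_equiv X Rl [P (\<Sum>i\<leftarrow>I. w i)] (map Q I)"
proof -
  have "fsum_equiv X Rl [P (\<Sum>i\<leftarrow>I. w i)] (map (\<lambda>i. P (w i)) I)"
    using fsum_equiv_sum_list[OF P, of "map w I"] w by (auto simp: o_def)
  also have "fsum_equiv X Rl (map (\<lambda>i. P (w i)) I) (map Q I)"
    using PQ by (rule fsum_equiv_map)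
  finally show ?thesis .
qed

lemma fsum_concat_transpose:
  "fsum (concat (map (\<lambda>x. map (f x) I) xs)) = fsum (concat (map (\<lambda>i. map (\<lambda>x. f x i) xs) I))"
proof (induct xs)
  case Nil
  show ?case by (induct I) simp_all
next
  case (Cons a xs)
  have "fsum (concat (map (\<lambda>i. map (\<lambda>x. f x i) (a # xs)) I))
      = fsum (map (f a) I) + fsum (concat (map (\<lambda>i. map (\<lambda>x. f x i) xs) I))"
    by (induct I) (simp_all add: algebra_simps)
  then show ?case using Cons by simp
qed

lemma fsum_equiv_regroup:
  assumes P: "\<And>i. i \<in> set I \<Longrightarrow> fsum_additive_on X Rl V (P i)"
    and c: "\<And>x i. x \<in> set xs \<Longrightarrow> i \<in> set I \<Longrightarrow> c x i \<in> V"
  shows "fsum_equiv X Rl (concat (map (\<lambda>x. map (\<lambda>i. P i (c x i)) I) xs))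
                         (map (\<lambda>i. P i (\<Sum>x\<leftarrow>xs. c x i)) I)"
proof -
  have "fsum_equiv X Rl (concat (map (\<lambda>x. map (\<lambda>i. P i (c x i)) I) xs))
                        (concat (map (\<lambda>i. map (\<lambda>x. P i (c x i)) xs) I))"
    using fsum_additive_on_mem[OF P c] by (intro fsum_equiv_by_fsum_eq fsum_concat_transpose) auto
  also have "fsum_equiv X Rl (concat (map (\<lambda>i. map (\<lambda>x. P i (c x i)) xs) I))
                             (concat (map (\<lambda>i. [P i (\<Sum>x\<leftarrow>xs. c x i)]) I))"
  proof (rule fsum_equiv_concat)
    fix i assume "i \<in> set I"
    then have "fsum_equiv X Rl [P i (\<Sum>x\<leftarrow>xs. c x i)] (map (\<lambda>x. P i (c x i)) xs)"
      using fsum_equiv_sum_list[OF P, of i "map (\<lambda>x. c x i) xs"] c by (auto simp: o_def)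
    then show "fsum_equiv X Rl (map (\<lambda>x. P i (c x i)) xs) [P i (\<Sum>x\<leftarrow>xs. c x i)]"
      by (rule fsum_equiv_sym)
  qed
  finally show ?thesis by simp
qed

lemma fsum_equiv_normal_form:
  assumes P: "\<And>i. i \<in> set I \<Longrightarrow> fsum_additive_on X Rl V (P i)"
    and c: "\<And>x i. x \<in> set xs \<Longrightarrow> i \<in> set I \<Longrightarrow> c x i \<in> V"
    and single: "\<And>x. x \<in> set xs \<Longrightarrow> fsum_equiv X Rl [x] (map (\<lambda>i. P i (c x i)) I)"
  shows "fsum_equiv X Rl xs (map (\<lambda>i. P i (\<Sum>x\<leftarrow>xs. c x i)) I)"
proof -
  have "fsum_equiv X Rl (map (\<lambda>x. x) xs) (concat (map (\<lambda>x. map (\<lambda>i. P i (c x i)) I) xs))"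
    using single by (rule fsum_equiv_map_concat)
  also have "fsum_equiv X Rl \<dots> (map (\<lambda>i. P i (\<Sum>x\<leftarrow>xs. c x i)) I)"
    using P c by (rule fsum_equiv_regroup)
  finally show ?thesis by simp
qed

lemma fsum_equiv_iff_invariant_eq:
  assumes inv: "\<And>xs ys. fsum_equiv X Rl xs ys \<Longrightarrow> F xs = F ys"
    and normal_form: "\<And>xs. set xs \<subseteq> X \<Longrightarrow> fsum_equiv X Rl xs (N (F xs))"
    and "set xs \<subseteq> X" "set ys \<subseteq> X"
  shows "fsum_equiv X Rl xs ys \<longleftrightarrow> F xs = F ys"
  using inv normal_form[of xs] normal_form[of ys] assms(3,4) fsum_equiv_trans fsum_equiv_sym
  by metis

lemma tensor_additive_left:
  assumes "0 \<in> M" "\<And>m m'. m \<in> M \<Longrightarrow> m' \<in> M \<Longrightarrow> m + m' \<in> M" "x \<in> N"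
  shows "fsum_additive_on (M \<times> N) (tensor_rels M N D r l) M (\<lambda>m. (m, x))"
  unfolding fsum_additive_on_def
proof (intro conjI ballI fsum_equiv_by_rel3)
  fix m m' assume "m \<in> M" "m' \<in> M"
  then show "gen (m + m', x) - gen (m, x) - gen (m', x) \<in> tensor_rels M N D r l"
    using assms(3) unfolding tensor_rels_def by blast
qed (use assms in auto)

lemma tensor_additive_right:
  assumes "0 \<in> N" "\<And>x x'. x \<in> N \<Longrightarrow> x' \<in> N \<Longrightarrow> x + x' \<in> N" "m \<in> M"
  shows "fsum_additive_on (M \<times> N) (tensor_rels M N D r l) N (\<lambda>x. (m, x))"
  unfolding fsum_additive_on_def
proof (intro conjI ballI fsum_equiv_by_rel3)
  fix x x' assume "x \<in> N" "x' \<in> N"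
  then show "gen (m, x + x') - gen (m, x) - gen (m, x') \<in> tensor_rels M N D r l"
    using assms(3) unfolding tensor_rels_def by blast
qed (use assms in auto)

lemma tensor_balanced:
  assumes "m \<in> M" "x \<in> N" "d \<in> D" "r m d \<in> M" "l d x \<in> N"
  shows "fsum_equiv (M \<times> N) (tensor_rels M N D r l) [(r m d, x)] [(m, l d x)]"
proof (rule fsum_equiv_by_rel2)
  show "gen (r m d, x) - gen (m, l d x) \<in> tensor_rels M N D r l"
    using assms(1-3) unfolding tensor_rels_def by blast
qed (use assms in auto)

lemma teq_sum_list_eq:
  fixes F :: "'m::plus \<times> 'n::plus \<Rightarrow> 'g::ab_group_add"
  assumes "teq M N D r l xs ys"
    and "\<And>m m' x. m \<in> M \<Longrightarrow> m' \<in> M \<Longrightarrow> x \<in> N \<Longrightarrow> F (m + m', x) = F (m, x) + F (m', x)"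
    and "\<And>m x x'. m \<in> M \<Longrightarrow> x \<in> N \<Longrightarrow> x' \<in> N \<Longrightarrow> F (m, x + x') = F (m, x) + F (m, x')"
    and "\<And>m x d. m \<in> M \<Longrightarrow> x \<in> N \<Longrightarrow> d \<in> D \<Longrightarrow> F (r m d, x) = F (m, l d x)"
  shows "sum_list (map F xs) = sum_list (map F ys)"
proof (rule fsum_equiv_sum_list_eq)
  show "fsum_equiv (M \<times> N) (tensor_rels M N D r l) xs ys"
    using assms(1) by (simp add: teq_eq_fsum_equiv)
next
  fix \<phi> assume "\<phi> \<in> tensor_rels M N D r l"
  then show "\<exists>as bs. \<phi> = fsum as - fsum bs \<and> sum_list (map F as) = sum_list (map F bs)"
    unfolding tensor_rels_def
  proof (elim UnE CollectE exE conjE)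
    fix m m' x assume "\<phi> = gen (m + m', x) - gen (m, x) - gen (m', x)" "m \<in> M" "m' \<in> M" "x \<in> N"
    then show ?thesis using assms(2)
      by (intro exI[of _ "[(m + m', x)]"] exI[of _ "[(m, x), (m', x)]"]) (simp add: algebra_simps)
  next
    fix m x x' assume "\<phi> = gen (m, x + x') - gen (m, x) - gen (m, x')" "m \<in> M" "x \<in> N" "x' \<in> N"
    then show ?thesis using assms(3)
      by (intro exI[of _ "[(m, x + x')]"] exI[of _ "[(m, x), (m, x')]"]) (simp add: algebra_simps)
  next
    fix m x d assume "\<phi> = gen (r m d, x) - gen (m, l d x)" "m \<in> M" "x \<in> N" "d \<in> D"
    then show ?thesis using assms(4)
      by (intro exI[of _ "[(r m d, x)]"] exI[of _ "[(m, l d x)]"]) simp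
  qed
qed

lemma tensor3_additive_1:
  assumes "0 \<in> M1" "\<And>a a'. a \<in> M1 \<Longrightarrow> a' \<in> M1 \<Longrightarrow> a + a' \<in> M1" "b \<in> M2" "c \<in> M3"
  shows "fsum_additive_on (M1 \<times> M2 \<times> M3) (tensor3_rels M1 M2 M3 D r1 l2 r2 l3) M1 (\<lambda>a. (a, b, c))"
  unfolding fsum_additive_on_def
proof (intro conjI ballI fsum_equiv_by_rel3)
  fix a a' assume "a \<in> M1" "a' \<in> M1"
  then show "gen (a + a', b, c) - gen (a, b, c) - gen (a', b, c) \<in> tensor3_rels M1 M2 M3 D r1 l2 r2 l3"
    using assms(3,4) unfolding tensor3_rels_def by blast
qed (use assms in auto)

lemma tensor3_additive_2:
  assumes "0 \<in> M2" "\<And>b b'. b \<in> M2 \<Longrightarrow> b' \<in> M2 \<Longrightarrow> b + b' \<in> M2" "a \<in> M1" "c \<in> M3"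
  shows "fsum_additive_on (M1 \<times> M2 \<times> M3) (tensor3_rels M1 M2 M3 D r1 l2 r2 l3) M2 (\<lambda>b. (a, b, c))"
  unfolding fsum_additive_on_def
proof (intro conjI ballI fsum_equiv_by_rel3)
  fix b b' assume "b \<in> M2" "b' \<in> M2"
  then show "gen (a, b + b', c) - gen (a, b, c) - gen (a, b', c) \<in> tensor3_rels M1 M2 M3 D r1 l2 r2 l3"
    using assms(3,4) unfolding tensor3_rels_def by blast
qed (use assms in auto)

lemma tensor3_additive_3:
  assumes "0 \<in> M3" "\<And>c c'. c \<in> M3 \<Longrightarrow> c' \<in> M3 \<Longrightarrow> c + c' \<in> M3" "a \<in> M1" "b \<in> M2"
  shows "fsum_additive_on (M1 \<times> M2 \<times> M3) (tensor3_rels M1 M2 M3 D r1 l2 r2 l3) M3 (\<lambda>c. (a, b, c))"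
  unfolding fsum_additive_on_def
proof (intro conjI ballI fsum_equiv_by_rel3)
  fix c c' assume "c \<in> M3" "c' \<in> M3"
  then show "gen (a, b, c + c') - gen (a, b, c) - gen (a, b, c') \<in> tensor3_rels M1 M2 M3 D r1 l2 r2 l3"
    using assms(3,4) unfolding tensor3_rels_def by blast
qed (use assms in auto)

lemma tensor3_balanced_12:
  assumes "a \<in> M1" "b \<in> M2" "c \<in> M3" "d \<in> D" "r1 a d \<in> M1" "l2 d b \<in> M2"
  shows "fsum_equiv (M1 \<times> M2 \<times> M3) (tensor3_rels M1 M2 M3 D r1 l2 r2 l3)
           [(r1 a d, b, c)] [(a, l2 d b, c)]"
proof (rule fsum_equiv_by_rel2)
  show "gen (r1 a d, b, c) - gen (a, l2 d b, c) \<in> tensor3_rels M1 M2 M3 D r1 l2 r2 l3"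
    using assms(1-4) unfolding tensor3_rels_def by blast
qed (use assms in auto)

lemma tensor3_balanced_23:
  assumes "a \<in> M1" "b \<in> M2" "c \<in> M3" "d \<in> D" "r2 b d \<in> M2" "l3 d c \<in> M3"
  shows "fsum_equiv (M1 \<times> M2 \<times> M3) (tensor3_rels M1 M2 M3 D r1 l2 r2 l3)
           [(a, r2 b d, c)] [(a, b, l3 d c)]"
proof (rule fsum_equiv_by_rel2)
  show "gen (a, r2 b d, c) - gen (a, b, l3 d c) \<in> tensor3_rels M1 M2 M3 D r1 l2 r2 l3"
    using assms(1-4) unfolding tensor3_rels_def by blast
qed (use assms in auto)

lemma Emaps_add: "g \<in> Emaps \<iota> \<Longrightarrow> g (x + y) = g x + g y"
  and Emaps_right_linear: "g \<in> Emaps \<iota> \<Longrightarrow> g (x * \<iota> b) = g x * \<iota> b"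
  and Smaps_left_linear: "\<alpha> \<in> Smaps \<iota> \<Longrightarrow> \<alpha> (\<iota> b * x) = \<iota> b * \<alpha> x"
  and Smaps_subset_Emaps: "Smaps \<iota> \<subseteq> Emaps \<iota>"
  and centralizer_commute: "r \<in> centralizer \<iota> \<Longrightarrow> r * \<iota> b = \<iota> b * r"
  by (auto simp: Emaps_def Smaps_def centralizer_def)

lemma Emaps_sum_list: "g \<in> Emaps \<iota> \<Longrightarrow> g (\<Sum>x\<leftarrow>xs. f x) = (\<Sum>x\<leftarrow>xs. g (f x))"
  by (rule additive_sum_list) (rule Emaps_add)

lemma lam_apply [simp]: "lam a x = a * x"
  and rho_apply [simp]: "rho a x = x * a"
  by (simp_all add: lam_def rho_def)

lemma rho_mult: "rho (a * b) = rho b \<circ> rho a"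
  by (simp add: fun_eq_iff mult.assoc)

lemma right_linear_iff_in_range_lam:
  fixes g :: "'a::ring_1 \<Rightarrow> 'a"
  shows "(\<forall>x y. g (x * y) = g x * y) \<longleftrightarrow> g \<in> range lam"
proof
  assume right_linear: "\<forall>x y. g (x * y) = g x * y"
  have "g y = lam (g 1) y" for y
    using right_linear[rule_format, of 1 y] by simp
  then show "g \<in> range lam" by (intro range_eqI ext)
qed (auto simp: mult.assoc)

lemma zero_in_Emaps: "0 \<in> Emaps \<iota>"
  and id_in_Emaps: "id \<in> Emaps \<iota>"
  and Emaps_plus: "f \<in> Emaps \<iota> \<Longrightarrow> g \<in> Emaps \<iota> \<Longrightarrow> f + g \<in> Emaps \<iota>"
  and Emaps_comp: "f \<in> Emaps \<iota> \<Longrightarrow> g \<in> Emaps \<iota> \<Longrightarrow> f \<circ> g \<in> Emaps \<iota>"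
  and lam_in_Emaps: "lam a \<in> Emaps \<iota>"
  and rho_in_Emaps: "r \<in> centralizer \<iota> \<Longrightarrow> rho r \<in> Emaps \<iota>"
  by (simp_all add: Emaps_def centralizer_def distrib_left distrib_right mult.assoc)

lemma zero_in_Smaps: "0 \<in> Smaps \<iota>"
  and id_in_Smaps: "id \<in> Smaps \<iota>"
  and Smaps_plus: "f \<in> Smaps \<iota> \<Longrightarrow> g \<in> Smaps \<iota> \<Longrightarrow> f + g \<in> Smaps \<iota>"
  and Smaps_comp: "f \<in> Smaps \<iota> \<Longrightarrow> g \<in> Smaps \<iota> \<Longrightarrow> f \<circ> g \<in> Smaps \<iota>"
  and rho_in_Smaps: "r \<in> centralizer \<iota> \<Longrightarrow> rho r \<in> Smaps \<iota>"
  by (simp_all add: Smaps_def centralizer_def distrib_left distrib_right mult.assoc)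

lemma lam_in_Smaps: "r \<in> centralizer \<iota> \<Longrightarrow> lam r \<in> Smaps \<iota>"
  by (simp add: Smaps_def distrib_left centralizer_commute flip: mult.assoc)

section \<open>Right B-linear maps on A \<otimes>_B A\<close>

text \<open>A right B-linear map from A \<otimes>_B A to A, as a function of the two tensor factors.\<close>
definition balanced_form :: "('b \<Rightarrow> 'a::ring_1) \<Rightarrow> ('a \<Rightarrow> 'a \<Rightarrow> 'a) \<Rightarrow> bool" where
  "balanced_form \<iota> F \<longleftrightarrow>
     (\<forall>x x' y. F (x + x') y = F x y + F x' y) \<and> (\<forall>x y y'. F x (y + y') = F x y + F x y') \<and>
     (\<forall>x y b. F (x * \<iota> b) y = F x (\<iota> b * y)) \<and> (\<forall>x y b. F x (y * \<iota> b) = F x y * \<iota> b)"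

lemma balanced_form_sum_list:
  assumes "\<And>p. p \<in> set ps \<Longrightarrow> balanced_form \<iota> (F p)"
  shows "balanced_form \<iota> (\<lambda>x y. \<Sum>p\<leftarrow>ps. F p x y)"
  using assms by (induct ps) (simp_all add: balanced_form_def algebra_simps)

definition contract :: "('a::ring_1 \<Rightarrow> 'a \<Rightarrow> 'a) \<Rightarrow> ('a \<times> 'a) list \<Rightarrow> 'a \<Rightarrow> 'a" where
  "contract F ts = (\<lambda>x. \<Sum>(y, z)\<leftarrow>ts. F x y * z)"

lemma contract_add: "contract (F + G) ts = contract F ts + contract G ts"
  by (simp add: contract_def fun_eq_iff case_prod_unfold distrib_right sum_list_addf)

lemma twist_eq_contract: "twist f ts = contract (\<lambda>x y. f (x * y)) ts"
  by (simp add: twist_def contract_def)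

lemma balanced_form_comp_mult: "f \<in> Emaps \<iota> \<Longrightarrow> balanced_form \<iota> (\<lambda>x y. f (x * y))"
  by (simp add: balanced_form_def distrib_left distrib_right Emaps_add mult.assoc
      flip: Emaps_right_linear)

lemma teqA_sum_list_eq:
  fixes F :: "'a::ring_1 \<Rightarrow> 'a \<Rightarrow> 'g::ab_group_add"
  assumes "teqA \<iota> xs ys"
    and "\<And>x x' y. F (x + x') y = F x y + F x' y" and "\<And>x y y'. F x (y + y') = F x y + F x y'"
    and "\<And>x y b. F (x * \<iota> b) y = F x (\<iota> b * y)"
  shows "(\<Sum>(x, y)\<leftarrow>xs. F x y) = (\<Sum>(x, y)\<leftarrow>ys. F x y)"
proof -
  have "sum_list (map (case_prod F) xs) = sum_list (map (case_prod F) ys)"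
    by (rule teq_sum_list_eq[OF assms(1)[unfolded teqA_def]]) (use assms(2-4) in auto)
  then show ?thesis by (simp add: case_prod_unfold)
qed

lemma Tset_balanced:
  fixes F :: "'a::ring_1 \<Rightarrow> 'a \<Rightarrow> 'g::ab_group_add"
  assumes "ts \<in> Tset \<iota>"
    and "\<And>x x' y. F (x + x') y = F x y + F x' y" and "\<And>x y y'. F x (y + y') = F x y + F x y'"
    and "\<And>x y b. F (x * \<iota> b) y = F x (\<iota> b * y)"
  shows "(\<Sum>(y, z)\<leftarrow>ts. F (\<iota> b * y) z) = (\<Sum>(y, z)\<leftarrow>ts. F y (z * \<iota> b))"
proof -
  have "teqA \<iota> (map (\<lambda>(x, y). (\<iota> b * x, y)) ts) (map (\<lambda>(x, y). (x, y * \<iota> b)) ts)"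
    using assms(1) by (simp add: Tset_def)
  from teqA_sum_list_eq[where F = F, OF this assms(2-4)] show ?thesis
    by (simp add: o_def case_prod_unfold)
qed

lemma contract_in_Emaps:
  assumes F: "balanced_form \<iota> F" and ts: "ts \<in> Tset \<iota>"
  shows "contract F ts \<in> Emaps \<iota>"
proof -
  have "(\<Sum>(y, z)\<leftarrow>ts. F x (\<iota> b * y) * z) = (\<Sum>(y, z)\<leftarrow>ts. F x y * (z * \<iota> b))" for x b
    using Tset_balanced[OF ts, of "\<lambda>y z. F x y * z"] F
    by (simp add: balanced_form_def algebra_simps)
  then show ?thesis
    using F by (simp add: Emaps_def contract_def balanced_form_def case_prod_unfold
        sum_list_addf distrib_right mult.assoc flip: sum_list_mult_const)
qed

lemma twist_in_Emaps: "f \<in> Emaps \<iota> \<Longrightarrow> ts \<in> Tset \<iota> \<Longrightarrow> twist f ts \<in> Emaps \<iota>"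
  by (simp add: twist_eq_contract contract_in_Emaps balanced_form_comp_mult)

lemma twist_in_Smaps:
  assumes "\<alpha> \<in> Smaps \<iota>" and "ts \<in> Tset \<iota>"
  shows "twist \<alpha> ts \<in> Smaps \<iota>"
proof -
  have "twist \<alpha> ts \<in> Emaps \<iota>"
    using assms Smaps_subset_Emaps by (blast intro: twist_in_Emaps)
  moreover have "twist \<alpha> ts (\<iota> b * x) = \<iota> b * twist \<alpha> ts x" for b x
    using assms(1)
    by (simp add: twist_def Smaps_left_linear mult.assoc case_prod_unfold flip: sum_list_const_mult)
  ultimately show ?thesis by (simp add: Emaps_def Smaps_def)
qed

lemma twist_one_in_centralizer:
  assumes \<alpha>: "\<alpha> \<in> Smaps \<iota>" and ts: "ts \<in> Tset \<iota>"
  shows "twist \<alpha> ts 1 \<in> centralizer \<iota>"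
proof -
  have "\<alpha> \<in> Emaps \<iota>" using \<alpha> Smaps_subset_Emaps by blast
  then have "(\<Sum>(y, z)\<leftarrow>ts. \<alpha> (\<iota> b * y) * z) = (\<Sum>(y, z)\<leftarrow>ts. \<alpha> y * (z * \<iota> b))" for b
    using Tset_balanced[OF ts, of "\<lambda>y z. \<alpha> y * z"] by (simp add: Emaps_add Emaps_right_linear algebra_simps)
  then show ?thesis
    using \<alpha> by (simp add: centralizer_def twist_def Smaps_left_linear case_prod_unfold mult.assoc
        flip: sum_list_const_mult sum_list_mult_const)
qed

abbreviation teq_EE :: "('b \<Rightarrow> 'a::ring_1) \<Rightarrow> (('a \<Rightarrow> 'a) \<times> ('a \<Rightarrow> 'a)) list \<Rightarrow> (('a \<Rightarrow> 'a) \<times> ('a \<Rightarrow> 'a)) list \<Rightarrow> bool" where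
  "teq_EE \<iota> \<equiv> teq (Emaps \<iota>) (Emaps \<iota>) (range lam) (\<circ>) (\<circ>)"

definition EE_form :: "(('a::ring_1 \<Rightarrow> 'a) \<times> ('a \<Rightarrow> 'a)) list \<Rightarrow> 'a \<Rightarrow> 'a \<Rightarrow> 'a" where
  "EE_form xs = (\<lambda>x y. \<Sum>(e, e')\<leftarrow>xs. e (e' x * y))"

lemma EE_form_eq_if_teq_EE:
  assumes "teq_EE \<iota> xs ys"
  shows "EE_form xs = EE_form ys"
proof (intro ext)
  fix x y
  have "(\<Sum>p\<leftarrow>xs. fst p (snd p x * y)) = (\<Sum>p\<leftarrow>ys. fst p (snd p x * y))"
    by (rule teq_sum_list_eq[OF assms]) (auto simp: Emaps_add distrib_right mult.assoc)
  then show "EE_form xs x y = EE_form ys x y"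
    by (simp add: EE_form_def case_prod_unfold)
qed

lemma EE_form_append: "EE_form (xs @ ys) = EE_form xs + EE_form ys"
  by (simp add: EE_form_def fun_eq_iff)

lemma EE_form_map_left: "EE_form (map (\<lambda>(x, y). (lam a \<circ> x, y)) xs) = (\<lambda>x y. a * EE_form xs x y)"
  by (simp add: EE_form_def fun_eq_iff o_def case_prod_unfold sum_list_const_mult)

lemma EE_form_map_right: "EE_form (map (\<lambda>(x, y). (x, y \<circ> c)) xs) = (\<lambda>x y. EE_form xs (c x) y)"
  by (simp add: EE_form_def fun_eq_iff o_def case_prod_unfold)

lemma balanced_form_EE_form:
  assumes "set xs \<subseteq> Emaps \<iota> \<times> Emaps \<iota>"
  shows "balanced_form \<iota> (EE_form xs)"
  unfolding EE_form_def case_prod_unfold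
proof (rule balanced_form_sum_list)
  fix p assume "p \<in> set xs"
  then have "fst p \<in> Emaps \<iota>" "snd p \<in> Emaps \<iota>" using assms by auto
  then show "balanced_form \<iota> (\<lambda>x y. fst p (snd p x * y))"
    unfolding balanced_form_def
    by (simp add: Emaps_add Emaps_right_linear distrib_left distrib_right mult.assoc)
      (simp add: Emaps_right_linear flip: mult.assoc)
qed

section \<open>Expansions along a left D2 quasibase\<close>

locale D2_quasibase =
  fixes \<iota> :: "'b::ring_1 \<Rightarrow> 'a::ring_1" and n :: nat and \<beta> :: "nat \<Rightarrow> 'a \<Rightarrow> 'a"
    and t :: "nat \<Rightarrow> ('a \<times> 'a) list"
  assumes quasibase: "left_D2_quasibase \<iota> n \<beta> t"
begin

lemma beta_in_Smaps: "k < n \<Longrightarrow> \<beta> k \<in> Smaps \<iota>"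
  and t_in_Tset: "k < n \<Longrightarrow> t k \<in> Tset \<iota>"
  using quasibase by (simp_all add: left_D2_quasibase_def)

lemma beta_in_Emaps: "k < n \<Longrightarrow> \<beta> k \<in> Emaps \<iota>"
  using beta_in_Smaps Smaps_subset_Emaps by blast

lemma quasibase_expansion:
  fixes F :: "'a \<Rightarrow> 'a \<Rightarrow> 'g::ab_group_add"
  assumes "\<And>x x' y. F (x + x') y = F x y + F x' y" and "\<And>x y y'. F x (y + y') = F x y + F x y'"
    and "\<And>x y b. F (x * \<iota> b) y = F x (\<iota> b * y)"
  shows "F a a' = (\<Sum>k\<leftarrow>[0..<n]. \<Sum>(y, z)\<leftarrow>t k. F y (z * (\<beta> k a * a')))"
proof -
  have "teqA \<iota> [(a, a')] (concat (map (\<lambda>k. map (\<lambda>(x, y). (x, y * (\<beta> k a * a'))) (t k)) [0..<n]))"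
    using quasibase by (simp add: left_D2_quasibase_def)
  from teqA_sum_list_eq[where F = F, OF this assms] show ?thesis
    by (simp add: sum_list_map_concat o_def case_prod_unfold)
qed

lemma balanced_form_expansion:
  assumes "balanced_form \<iota> F"
  shows "(\<Sum>k\<leftarrow>[0..<n]. contract F (t k) x * \<beta> k u) = F x u"
  using quasibase_expansion[of "\<lambda>y z. F x y * z" u 1] assms
  by (simp add: balanced_form_def contract_def algebra_simps case_prod_unfold
      flip: sum_list_mult_const)

lemma twist_expansion: "f \<in> Emaps \<iota> \<Longrightarrow> (\<Sum>k\<leftarrow>[0..<n]. twist f (t k) x * \<beta> k u) = f (x * u)"
  using balanced_form_expansion[OF balanced_form_comp_mult] by (simp add: twist_eq_contract)

lemma Emaps_expansion: "e \<in> Emaps \<iota> \<Longrightarrow> e = (\<Sum>k\<leftarrow>[0..<n]. lam (twist e (t k) 1) \<circ> \<beta> k)"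
  using twist_expansion[of e 1] by (simp add: fun_eq_iff sum_list_apply)

lemma fsum_equiv_Smaps_expand:
  assumes P: "fsum_additive_on X Rl (Smaps \<iota>) P" and \<alpha>: "\<alpha> \<in> Smaps \<iota>"
    and balanced: "\<And>k r. k < n \<Longrightarrow> r \<in> centralizer \<iota> \<Longrightarrow> fsum_equiv X Rl [P (lam r \<circ> \<beta> k)] [Q k r]"
  shows "fsum_equiv X Rl [P \<alpha>] (map (\<lambda>k. Q k (twist \<alpha> (t k) 1)) [0..<n])"
proof -
  have "fsum_equiv X Rl [P (\<Sum>k\<leftarrow>[0..<n]. lam (twist \<alpha> (t k) 1) \<circ> \<beta> k)]
          (map (\<lambda>k. Q k (twist \<alpha> (t k) 1)) [0..<n])"
  proof (rule fsum_equiv_expand[OF P])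
    fix k assume "k \<in> set [0..<n]"
    then have k: "k < n" by simp
    have r: "twist \<alpha> (t k) 1 \<in> centralizer \<iota>"
      by (rule twist_one_in_centralizer[OF \<alpha> t_in_Tset[OF k]])
    show "lam (twist \<alpha> (t k) 1) \<circ> \<beta> k \<in> Smaps \<iota>"
      by (rule Smaps_comp[OF lam_in_Smaps[OF r] beta_in_Smaps[OF k]])
    show "fsum_equiv X Rl [P (lam (twist \<alpha> (t k) 1) \<circ> \<beta> k)] [Q k (twist \<alpha> (t k) 1)]"
      by (rule balanced[OF k r])
  qed
  moreover have "(\<Sum>k\<leftarrow>[0..<n]. lam (twist \<alpha> (t k) 1) \<circ> \<beta> k) = \<alpha>"
    using \<alpha> Smaps_subset_Emaps by (auto intro: Emaps_expansion[symmetric])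
  ultimately show ?thesis by simp
qed

section \<open>The tensor products as spaces of maps on A \<otimes>_B A\<close>

definition EE_of_form :: "('a \<Rightarrow> 'a \<Rightarrow> 'a) \<Rightarrow> (('a \<Rightarrow> 'a) \<times> ('a \<Rightarrow> 'a)) list" where
  "EE_of_form F = map (\<lambda>k. (\<lambda>x. \<Sum>(y, z)\<leftarrow>t k. F y (z * x), \<beta> k)) [0..<n]"

lemma EE_of_form_in_Emaps:
  assumes "balanced_form \<iota> F"
  shows "set (EE_of_form F) \<subseteq> Emaps \<iota> \<times> Emaps \<iota>"
proof -
  have "(\<lambda>x. \<Sum>(y, z)\<leftarrow>ts. F y (z * x)) \<in> Emaps \<iota>" for ts
    using assms by (simp add: Emaps_def balanced_form_def case_prod_unfold distrib_left sum_list_addf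
        flip: sum_list_mult_const mult.assoc)
  then show ?thesis by (auto simp: EE_of_form_def beta_in_Emaps)
qed

lemma EE_form_EE_of_form:
  assumes "balanced_form \<iota> F"
  shows "EE_form (EE_of_form F) = F"
proof (intro ext)
  fix x u
  have "F x u = (\<Sum>k\<leftarrow>[0..<n]. \<Sum>(y, z)\<leftarrow>t k. F y (z * (\<beta> k x * u)))"
    by (rule quasibase_expansion) (use assms in \<open>simp_all add: balanced_form_def\<close>)
  then show "EE_form (EE_of_form F) x u = F x u"
    by (simp add: EE_form_def EE_of_form_def o_def)
qed

lemma EE_single_normal_form:
  assumes e: "e \<in> Emaps \<iota>" and e': "e' \<in> Emaps \<iota>"
  shows "teq_EE \<iota> [(e, e')] (map (\<lambda>k. (e \<circ> lam (twist e' (t k) 1), \<beta> k)) [0..<n])"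
proof -
  let ?X = "Emaps \<iota> \<times> Emaps \<iota>" and ?Rl = "tensor_rels (Emaps \<iota>) (Emaps \<iota>) (range lam) (\<circ>) (\<circ>)"
  have "fsum_equiv ?X ?Rl [(e, \<Sum>k\<leftarrow>[0..<n]. lam (twist e' (t k) 1) \<circ> \<beta> k)]
          (map (\<lambda>k. (e \<circ> lam (twist e' (t k) 1), \<beta> k)) [0..<n])"
  proof (rule fsum_equiv_expand[where V = "Emaps \<iota>"])
    show "fsum_additive_on ?X ?Rl (Emaps \<iota>) (\<lambda>v. (e, v))"
      using e by (intro tensor_additive_right zero_in_Emaps Emaps_plus)
  next
    fix k assume "k \<in> set [0..<n]"
    then have \<beta>: "\<beta> k \<in> Emaps \<iota>" by (simp add: beta_in_Emaps)
    then show "lam (twist e' (t k) 1) \<circ> \<beta> k \<in> Emaps \<iota>"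
      by (simp add: Emaps_comp lam_in_Emaps)
    show "fsum_equiv ?X ?Rl [(e, lam (twist e' (t k) 1) \<circ> \<beta> k)] [(e \<circ> lam (twist e' (t k) 1), \<beta> k)]"
      by (rule fsum_equiv_sym, rule tensor_balanced) (simp_all add: e \<beta> Emaps_comp lam_in_Emaps)
  qed
  then show ?thesis
    using Emaps_expansion[OF e'] by (simp add: teq_eq_fsum_equiv)
qed

lemma EE_coefficients_sum:
  assumes xs: "set xs \<subseteq> Emaps \<iota> \<times> Emaps \<iota>"
  shows "(\<Sum>q\<leftarrow>xs. fst q \<circ> lam (twist (snd q) (t k) 1)) = (\<lambda>x. \<Sum>(y, z)\<leftarrow>t k. EE_form xs y (z * x))"
proof
  fix x
  have "(\<Sum>q\<leftarrow>xs. fst q \<circ> lam (twist (snd q) (t k) 1)) x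
      = (\<Sum>q\<leftarrow>xs. fst q (twist (snd q) (t k) 1 * x))"
    by (simp add: sum_list_apply)
  also have "\<dots> = (\<Sum>q\<leftarrow>xs. \<Sum>(y, z)\<leftarrow>t k. fst q (snd q y * (z * x)))"
  proof (intro arg_cong[where f = sum_list] map_cong refl)
    fix q assume "q \<in> set xs"
    then have "fst q \<in> Emaps \<iota>" using xs by auto
    then show "fst q (twist (snd q) (t k) 1 * x) = (\<Sum>(y, z)\<leftarrow>t k. fst q (snd q y * (z * x)))"
      by (simp add: twist_def Emaps_sum_list case_prod_unfold mult.assoc flip: sum_list_mult_const)
  qed
  also have "\<dots> = (\<Sum>(y, z)\<leftarrow>t k. EE_form xs y (z * x))"
    by (simp add: EE_form_def case_prod_unfold sum_list_swap[of _ xs])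
  finally show "(\<Sum>q\<leftarrow>xs. fst q \<circ> lam (twist (snd q) (t k) 1)) x = (\<Sum>(y, z)\<leftarrow>t k. EE_form xs y (z * x))" .
qed

lemma EE_normal_form:
  assumes xs: "set xs \<subseteq> Emaps \<iota> \<times> Emaps \<iota>"
  shows "teq_EE \<iota> xs (EE_of_form (EE_form xs))"
proof -
  let ?X = "Emaps \<iota> \<times> Emaps \<iota>" and ?Rl = "tensor_rels (Emaps \<iota>) (Emaps \<iota>) (range lam) (\<circ>) (\<circ>)"
  let ?c = "\<lambda>q k. fst q \<circ> lam (twist (snd q) (t k) 1)"
  have "fsum_equiv ?X ?Rl xs (map (\<lambda>k. (\<Sum>q\<leftarrow>xs. ?c q k, \<beta> k)) [0..<n])"
  proof (rule fsum_equiv_normal_form[where V = "Emaps \<iota>" and P = "\<lambda>k v. (v, \<beta> k)"])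
    show "fsum_additive_on ?X ?Rl (Emaps \<iota>) (\<lambda>v. (v, \<beta> k))" if "k \<in> set [0..<n]" for k
      using that by (intro tensor_additive_left zero_in_Emaps Emaps_plus beta_in_Emaps) auto
    show "?c q k \<in> Emaps \<iota>" if "q \<in> set xs" for q k
      using that xs by (intro Emaps_comp lam_in_Emaps) auto
    show "fsum_equiv ?X ?Rl [q] (map (\<lambda>k. (?c q k, \<beta> k)) [0..<n])" if "q \<in> set xs" for q
      using that xs EE_single_normal_form[of "fst q" "snd q"] by (auto simp: teq_eq_fsum_equiv)
  qed
  moreover note EE_coefficients_sum[OF xs]
  ultimately show ?thesis
    by (simp add: teq_eq_fsum_equiv EE_of_form_def)
qed

lemma teq_EE_iff_EE_form_eq:
  assumes "set xs \<subseteq> Emaps \<iota> \<times> Emaps \<iota>" and "set ys \<subseteq> Emaps \<iota> \<times> Emaps \<iota>"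
  shows "teq_EE \<iota> xs ys \<longleftrightarrow> EE_form xs = EE_form ys"
  using fsum_equiv_iff_invariant_eq[where F = EE_form and N = EE_of_form, OF _ _ assms]
    EE_form_eq_if_teq_EE[unfolded teq_eq_fsum_equiv] EE_normal_form[unfolded teq_eq_fsum_equiv]
  unfolding teq_eq_fsum_equiv by blast

end

abbreviation teq_SE :: "('b \<Rightarrow> 'a::ring_1) \<Rightarrow> (('a \<Rightarrow> 'a) \<times> ('a \<Rightarrow> 'a)) list \<Rightarrow> (('a \<Rightarrow> 'a) \<times> ('a \<Rightarrow> 'a)) list \<Rightarrow> bool" where
  "teq_SE \<iota> \<equiv> teq (Smaps \<iota>) (Emaps \<iota>) (centralizer \<iota>) (\<lambda>h r. lam r \<circ> h) (\<lambda>r x. rho r \<circ> x)"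

definition SE_form :: "(('a::ring_1 \<Rightarrow> 'a) \<times> ('a \<Rightarrow> 'a)) list \<Rightarrow> 'a \<Rightarrow> 'a \<Rightarrow> 'a" where
  "SE_form zs = (\<lambda>x y. \<Sum>(\<alpha>, g)\<leftarrow>zs. g x * \<alpha> y)"

lemma SE_form_eq_if_teq_SE:
  assumes "teq_SE \<iota> zs ws"
  shows "SE_form zs = SE_form ws"
proof (intro ext)
  fix x y
  have "(\<Sum>p\<leftarrow>zs. snd p x * fst p y) = (\<Sum>p\<leftarrow>ws. snd p x * fst p y)"
    by (rule teq_sum_list_eq[OF assms]) (auto simp: distrib_left distrib_right mult.assoc)
  then show "SE_form zs x y = SE_form ws x y"
    by (simp add: SE_form_def case_prod_unfold)
qed

lemma balanced_form_SE_form: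
  assumes "set zs \<subseteq> Smaps \<iota> \<times> Emaps \<iota>"
  shows "balanced_form \<iota> (SE_form zs)"
  unfolding SE_form_def case_prod_unfold
proof (rule balanced_form_sum_list)
  fix p assume "p \<in> set zs"
  then have "fst p \<in> Smaps \<iota>" "snd p \<in> Emaps \<iota>" using assms by auto
  moreover then have "fst p \<in> Emaps \<iota>" using Smaps_subset_Emaps by auto
  ultimately show "balanced_form \<iota> (\<lambda>x y. snd p x * fst p y)"
    unfolding balanced_form_def
    by (simp add: Emaps_add Emaps_right_linear Smaps_left_linear distrib_left distrib_right
        mult.assoc)
qed

context D2_quasibase
begin

definition SE_of_form :: "('a \<Rightarrow> 'a \<Rightarrow> 'a) \<Rightarrow> (('a \<Rightarrow> 'a) \<times> ('a \<Rightarrow> 'a)) list" where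
  "SE_of_form G = map (\<lambda>k. (\<beta> k, contract G (t k))) [0..<n]"

lemma SE_single_normal_form:
  assumes \<alpha>: "\<alpha> \<in> Smaps \<iota>" and g: "g \<in> Emaps \<iota>"
  shows "teq_SE \<iota> [(\<alpha>, g)] (map (\<lambda>k. (\<beta> k, rho (twist \<alpha> (t k) 1) \<circ> g)) [0..<n])"
  unfolding teq_eq_fsum_equiv
proof (rule fsum_equiv_Smaps_expand[OF _ \<alpha>])
  show "fsum_additive_on (Smaps \<iota> \<times> Emaps \<iota>) (tensor_rels (Smaps \<iota>) (Emaps \<iota>) (centralizer \<iota>)
      (\<lambda>h r. lam r \<circ> h) (\<lambda>r x. rho r \<circ> x)) (Smaps \<iota>) (\<lambda>u. (u, g))"
    using g by (intro tensor_additive_left zero_in_Smaps Smaps_plus)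
  fix k r assume "k < n" "r \<in> centralizer \<iota>"
  then show "fsum_equiv (Smaps \<iota> \<times> Emaps \<iota>) (tensor_rels (Smaps \<iota>) (Emaps \<iota>) (centralizer \<iota>)
      (\<lambda>h r. lam r \<circ> h) (\<lambda>r x. rho r \<circ> x)) [(lam r \<circ> \<beta> k, g)] [(\<beta> k, rho r \<circ> g)]"
    using tensor_balanced[of "\<beta> k" "Smaps \<iota>" g "Emaps \<iota>" r "centralizer \<iota>" "\<lambda>h r. lam r \<circ> h"
        "\<lambda>r x. rho r \<circ> x"] g
    by (simp add: beta_in_Smaps Smaps_comp lam_in_Smaps Emaps_comp rho_in_Emaps)
qed

lemma SE_coefficients_sum:
  "(\<Sum>q\<leftarrow>zs. rho (twist (fst q) (t k) 1) \<circ> snd q) = contract (SE_form zs) (t k)"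
proof
  fix x
  have "(\<Sum>q\<leftarrow>zs. rho (twist (fst q) (t k) 1) \<circ> snd q) x
      = (\<Sum>q\<leftarrow>zs. \<Sum>(y, z)\<leftarrow>t k. snd q x * fst q y * z)"
    by (simp add: sum_list_apply twist_def case_prod_unfold mult.assoc flip: sum_list_const_mult)
  also have "\<dots> = contract (SE_form zs) (t k) x"
    by (simp add: contract_def SE_form_def case_prod_unfold sum_list_swap[of _ zs]
        flip: sum_list_mult_const)
  finally show "(\<Sum>q\<leftarrow>zs. rho (twist (fst q) (t k) 1) \<circ> snd q) x = contract (SE_form zs) (t k) x" .
qed

lemma SE_normal_form:
  assumes zs: "set zs \<subseteq> Smaps \<iota> \<times> Emaps \<iota>"
  shows "teq_SE \<iota> zs (SE_of_form (SE_form zs))"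
proof -
  let ?X = "Smaps \<iota> \<times> Emaps \<iota>"
    and ?Rl = "tensor_rels (Smaps \<iota>) (Emaps \<iota>) (centralizer \<iota>) (\<lambda>h r. lam r \<circ> h) (\<lambda>r x. rho r \<circ> x)"
  let ?c = "\<lambda>q k. rho (twist (fst q) (t k) 1) \<circ> snd q"
  have "fsum_equiv ?X ?Rl zs (map (\<lambda>k. (\<beta> k, \<Sum>q\<leftarrow>zs. ?c q k)) [0..<n])"
  proof (rule fsum_equiv_normal_form[where V = "Emaps \<iota>" and P = "\<lambda>k v. (\<beta> k, v)"])
    show "fsum_additive_on ?X ?Rl (Emaps \<iota>) (\<lambda>v. (\<beta> k, v))" if "k \<in> set [0..<n]" for k
      using that by (intro tensor_additive_right zero_in_Emaps Emaps_plus beta_in_Smaps) auto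
    show "?c q k \<in> Emaps \<iota>" if "q \<in> set zs" "k \<in> set [0..<n]" for q k
      using that zs by (intro Emaps_comp rho_in_Emaps twist_one_in_centralizer t_in_Tset) auto
    show "fsum_equiv ?X ?Rl [q] (map (\<lambda>k. (\<beta> k, ?c q k)) [0..<n])" if "q \<in> set zs" for q
      using that zs SE_single_normal_form[of "fst q" "snd q"] by (auto simp: teq_eq_fsum_equiv)
  qed
  moreover note SE_coefficients_sum
  ultimately show ?thesis
    by (simp add: teq_eq_fsum_equiv SE_of_form_def)
qed

lemma teq_SE_iff_SE_form_eq:
  assumes "set zs \<subseteq> Smaps \<iota> \<times> Emaps \<iota>" and "set ws \<subseteq> Smaps \<iota> \<times> Emaps \<iota>"
  shows "teq_SE \<iota> zs ws \<longleftrightarrow> SE_form zs = SE_form ws"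
  using fsum_equiv_iff_invariant_eq[where F = SE_form and N = SE_of_form, OF _ _ assms]
    SE_form_eq_if_teq_SE[unfolded teq_eq_fsum_equiv] SE_normal_form[unfolded teq_eq_fsum_equiv]
  unfolding teq_eq_fsum_equiv by blast

end

abbreviation teq_SSE :: "('b \<Rightarrow> 'a::ring_1) \<Rightarrow> (('a \<Rightarrow> 'a) \<times> ('a \<Rightarrow> 'a) \<times> ('a \<Rightarrow> 'a)) list
    \<Rightarrow> (('a \<Rightarrow> 'a) \<times> ('a \<Rightarrow> 'a) \<times> ('a \<Rightarrow> 'a)) list \<Rightarrow> bool" where
  "teq_SSE \<iota> \<equiv> teq3 (Smaps \<iota>) (Smaps \<iota>) (Emaps \<iota>) (centralizer \<iota>)
     (\<lambda>h r. lam r \<circ> h) (\<lambda>r h. rho r \<circ> h) (\<lambda>h r. lam r \<circ> h) (\<lambda>r x. rho r \<circ> x)"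

definition SSE_form ::
  "(('a::ring_1 \<Rightarrow> 'a) \<times> ('a \<Rightarrow> 'a) \<times> ('a \<Rightarrow> 'a)) list \<Rightarrow> 'a \<Rightarrow> 'a \<Rightarrow> 'a \<Rightarrow> 'a" where
  "SSE_form ws = (\<lambda>x y w. \<Sum>(\<alpha>, h, g)\<leftarrow>ws. g x * h y * \<alpha> w)"

context D2_quasibase
begin

definition SSE_of_form ::
  "('a \<Rightarrow> 'a \<Rightarrow> 'a \<Rightarrow> 'a) \<Rightarrow> (('a \<Rightarrow> 'a) \<times> ('a \<Rightarrow> 'a) \<times> ('a \<Rightarrow> 'a)) list" where
  "SSE_of_form G = map (\<lambda>(k, m). (\<beta> k, \<beta> m, \<lambda>x. \<Sum>(y', z')\<leftarrow>t m. \<Sum>(y, z)\<leftarrow>t k. G x y' y * z * z'))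
     (List.product [0..<n] [0..<n])"

lemma SSE_single_normal_form:
  assumes a: "a \<in> Smaps \<iota>" and h: "h \<in> Smaps \<iota>" and c: "c \<in> Emaps \<iota>"
  shows "teq_SSE \<iota> [(a, h, c)] (map (\<lambda>(k, m). (\<beta> k, \<beta> m,
           rho (twist (rho (twist a (t k) 1) \<circ> h) (t m) 1) \<circ> c)) (List.product [0..<n] [0..<n]))"
proof -
  let ?X = "Smaps \<iota> \<times> Smaps \<iota> \<times> Emaps \<iota>"
    and ?Rl = "tensor3_rels (Smaps \<iota>) (Smaps \<iota>) (Emaps \<iota>) (centralizer \<iota>)
                 (\<lambda>h r. lam r \<circ> h) (\<lambda>r h. rho r \<circ> h) (\<lambda>h r. lam r \<circ> h) (\<lambda>r x. rho r \<circ> x)"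
  let ?h = "\<lambda>k. rho (twist a (t k) 1) \<circ> h"
  have h_k: "?h k \<in> Smaps \<iota>" if "k < n" for k
    using that by (intro Smaps_comp rho_in_Smaps twist_one_in_centralizer[OF a] t_in_Tset h)
  have "fsum_equiv ?X ?Rl [(a, h, c)] (map (\<lambda>k. (\<beta> k, ?h k, c)) [0..<n])"
  proof (rule fsum_equiv_Smaps_expand[OF _ a])
    show "fsum_additive_on ?X ?Rl (Smaps \<iota>) (\<lambda>u. (u, h, c))"
      using h c by (intro tensor3_additive_1 zero_in_Smaps Smaps_plus)
    fix k r assume "k < n" "r \<in> centralizer \<iota>"
    then show "fsum_equiv ?X ?Rl [(lam r \<circ> \<beta> k, h, c)] [(\<beta> k, rho r \<circ> h, c)]"
      using h c by (intro tensor3_balanced_12[where a = "\<beta> k"])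
        (simp_all add: beta_in_Smaps Smaps_comp lam_in_Smaps rho_in_Smaps)
  qed
  also have "fsum_equiv ?X ?Rl (map (\<lambda>k. (\<beta> k, ?h k, c)) [0..<n])
      (concat (map (\<lambda>k. map (\<lambda>m. (\<beta> k, \<beta> m, rho (twist (?h k) (t m) 1) \<circ> c)) [0..<n]) [0..<n]))"
  proof (rule fsum_equiv_map_concat)
    fix k assume "k \<in> set [0..<n]"
    then have k: "k < n" by simp
    show "fsum_equiv ?X ?Rl [(\<beta> k, ?h k, c)] (map (\<lambda>m. (\<beta> k, \<beta> m, rho (twist (?h k) (t m) 1) \<circ> c)) [0..<n])"
    proof (rule fsum_equiv_Smaps_expand[OF _ h_k[OF k]])
      show "fsum_additive_on ?X ?Rl (Smaps \<iota>) (\<lambda>u. (\<beta> k, u, c))"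
        using k c by (intro tensor3_additive_2 zero_in_Smaps Smaps_plus beta_in_Smaps)
      fix m r assume "m < n" "r \<in> centralizer \<iota>"
      then show "fsum_equiv ?X ?Rl [(\<beta> k, lam r \<circ> \<beta> m, c)] [(\<beta> k, \<beta> m, rho r \<circ> c)]"
        using k c by (intro tensor3_balanced_23[where b = "\<beta> m"])
          (simp_all add: beta_in_Smaps Smaps_comp lam_in_Smaps Emaps_comp rho_in_Emaps)
    qed
  qed
  finally show ?thesis
    by (simp add: teq3_eq_fsum_equiv product_concat_map map_concat o_def)
qed

lemma SSE_coefficients_sum:
  "(\<Sum>q\<leftarrow>ws. rho (twist (rho (twist (fst q) (t k) 1) \<circ> fst (snd q)) (t m) 1) \<circ> snd (snd q))
     = (\<lambda>x. \<Sum>(y', z')\<leftarrow>t m. \<Sum>(y, z)\<leftarrow>t k. SSE_form ws x y' y * z * z')"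
proof
  fix x
  have "(\<Sum>q\<leftarrow>ws. rho (twist (rho (twist (fst q) (t k) 1) \<circ> fst (snd q)) (t m) 1) \<circ> snd (snd q)) x
      = (\<Sum>q\<leftarrow>ws. \<Sum>(y', z')\<leftarrow>t m. \<Sum>(y, z)\<leftarrow>t k. snd (snd q) x * fst (snd q) y' * fst q y * z * z')"
    by (simp add: sum_list_apply twist_def case_prod_unfold mult.assoc
        flip: sum_list_const_mult sum_list_mult_const)
  also have "\<dots> = (\<Sum>(y', z')\<leftarrow>t m. \<Sum>(y, z)\<leftarrow>t k. SSE_form ws x y' y * z * z')"
    by (simp add: SSE_form_def case_prod_unfold sum_list_swap[of _ ws] flip: sum_list_mult_const)
  finally show "(\<Sum>q\<leftarrow>ws. rho (twist (rho (twist (fst q) (t k) 1) \<circ> fst (snd q)) (t m) 1) \<circ> snd (snd q)) x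
      = (\<Sum>(y', z')\<leftarrow>t m. \<Sum>(y, z)\<leftarrow>t k. SSE_form ws x y' y * z * z')" .
qed

lemma SSE_normal_form:
  assumes ws: "set ws \<subseteq> Smaps \<iota> \<times> Smaps \<iota> \<times> Emaps \<iota>"
  shows "teq_SSE \<iota> ws (SSE_of_form (SSE_form ws))"
proof -
  let ?X = "Smaps \<iota> \<times> Smaps \<iota> \<times> Emaps \<iota>"
    and ?Rl = "tensor3_rels (Smaps \<iota>) (Smaps \<iota>) (Emaps \<iota>) (centralizer \<iota>)
                 (\<lambda>h r. lam r \<circ> h) (\<lambda>r h. rho r \<circ> h) (\<lambda>h r. lam r \<circ> h) (\<lambda>r x. rho r \<circ> x)"
  let ?I = "List.product [0..<n] [0..<n]"
  let ?c = "\<lambda>q km. rho (twist (rho (twist (fst q) (t (fst km)) 1) \<circ> fst (snd q)) (t (snd km)) 1)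
              \<circ> snd (snd q)"
  have "fsum_equiv ?X ?Rl ws (map (\<lambda>km. (\<beta> (fst km), \<beta> (snd km), \<Sum>q\<leftarrow>ws. ?c q km)) ?I)"
  proof (rule fsum_equiv_normal_form[where V = "Emaps \<iota>" and P = "\<lambda>km v. (\<beta> (fst km), \<beta> (snd km), v)"])
    show "fsum_additive_on ?X ?Rl (Emaps \<iota>) (\<lambda>v. (\<beta> (fst km), \<beta> (snd km), v))" if "km \<in> set ?I" for km
      using that by (intro tensor3_additive_3 zero_in_Emaps Emaps_plus beta_in_Smaps) auto
  next
    fix q km assume "q \<in> set ws" "km \<in> set ?I"
    then have "fst q \<in> Smaps \<iota>" "fst (snd q) \<in> Smaps \<iota>" "snd (snd q) \<in> Emaps \<iota>"
      and "fst km < n" "snd km < n"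
      using ws by auto
    then show "?c q km \<in> Emaps \<iota>"
      by (intro Emaps_comp rho_in_Emaps twist_one_in_centralizer Smaps_comp rho_in_Smaps t_in_Tset)
  next
    fix q assume "q \<in> set ws"
    then show "fsum_equiv ?X ?Rl [q] (map (\<lambda>km. (\<beta> (fst km), \<beta> (snd km), ?c q km)) ?I)"
      using ws SSE_single_normal_form[of "fst q" "fst (snd q)" "snd (snd q)"]
      by (auto simp: teq3_eq_fsum_equiv case_prod_unfold)
  qed
  moreover note SSE_coefficients_sum
  ultimately show ?thesis
    by (simp add: teq3_eq_fsum_equiv SSE_of_form_def case_prod_unfold)
qed

lemma teq_SSE_if_SSE_form_eq:
  assumes "set ws \<subseteq> Smaps \<iota> \<times> Smaps \<iota> \<times> Emaps \<iota>" and "set vs \<subseteq> Smaps \<iota> \<times> Smaps \<iota> \<times> Emaps \<iota>"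
    and "SSE_form ws = SSE_form vs"
  shows "teq_SSE \<iota> ws vs"
  using SSE_normal_form[OF assms(1)] SSE_normal_form[OF assms(2)] assms(3)
  unfolding teq3_eq_fsum_equiv by (auto intro: fsum_equiv_trans[OF _ fsum_equiv_sym])

section \<open>The coaction and the Galois property\<close>

lemma deltaL_in_SE: "g \<in> Emaps \<iota> \<Longrightarrow> set (deltaL n \<beta> t g) \<subseteq> Smaps \<iota> \<times> Emaps \<iota>"
  by (auto simp: deltaL_def beta_in_Smaps twist_in_Emaps t_in_Tset)

lemma SE_form_deltaL: "g \<in> Emaps \<iota> \<Longrightarrow> SE_form (deltaL n \<beta> t g) = (\<lambda>x y. g (x * y))"
  by (simp add: fun_eq_iff SE_form_def deltaL_def o_def twist_expansion)

lemma teq_SE_deltaL_iff: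
  assumes "g \<in> Emaps \<iota>" and "set zs \<subseteq> Smaps \<iota> \<times> Emaps \<iota>"
  shows "teq_SE \<iota> (deltaL n \<beta> t g) zs \<longleftrightarrow> (\<forall>x y. SE_form zs x y = g (x * y))"
  using teq_SE_iff_SE_form_eq[OF deltaL_in_SE[OF assms(1)] assms(2)]
  by (auto simp: SE_form_deltaL[OF assms(1)] fun_eq_iff)

lemma coinvariants_deltaL:
  "coinvariants (Smaps \<iota>) (\<circ>) id lam (centralizer \<iota>) (Emaps \<iota>) (\<circ>) rho (deltaL n \<beta> t) = range lam"
proof -
  have coinvariant_iff: "teq_SE \<iota> (deltaL n \<beta> t g) [(id, g)] \<longleftrightarrow> g \<in> range lam"
    if g: "g \<in> Emaps \<iota>" for g
  proof -
    have "teq_SE \<iota> (deltaL n \<beta> t g) [(id, g)] \<longleftrightarrow> (\<forall>x y. g (x * y) = g x * y)"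
      using g by (auto simp: teq_SE_deltaL_iff id_in_Smaps SE_form_def)
    also have "\<dots> \<longleftrightarrow> g \<in> range lam"
      by (rule right_linear_iff_in_range_lam)
    finally show ?thesis .
  qed
  have "range lam \<subseteq> Emaps \<iota>"
    using lam_in_Emaps by blast
  then show ?thesis
    unfolding coinvariants_def teqHC_def by (auto simp: coinvariant_iff)
qed

lemma deltaL_id: "teq_SE \<iota> (deltaL n \<beta> t id) [(id, id)]"
  by (simp add: teq_SE_deltaL_iff id_in_Emaps id_in_Smaps SE_form_def)

lemma deltaL_target_balanced:
  assumes g: "g \<in> Emaps \<iota>" and r: "r \<in> centralizer \<iota>"
  shows "teq_SE \<iota> (map (\<lambda>(h, x). (h \<circ> lam r, x)) (deltaL n \<beta> t g))
                    (map (\<lambda>(h, x). (h, x \<circ> rho r)) (deltaL n \<beta> t g))"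
proof (rule teq_SE_iff_SE_form_eq[THEN iffD2])
  show "set (map (\<lambda>(h, x). (h \<circ> lam r, x)) (deltaL n \<beta> t g)) \<subseteq> Smaps \<iota> \<times> Emaps \<iota>"
    and "set (map (\<lambda>(h, x). (h, x \<circ> rho r)) (deltaL n \<beta> t g)) \<subseteq> Smaps \<iota> \<times> Emaps \<iota>"
    using g r by (auto simp: deltaL_def beta_in_Smaps lam_in_Smaps Smaps_comp twist_in_Emaps
        t_in_Tset rho_in_Emaps Emaps_comp)
  show "SE_form (map (\<lambda>(h, x). (h \<circ> lam r, x)) (deltaL n \<beta> t g))
      = SE_form (map (\<lambda>(h, x). (h, x \<circ> rho r)) (deltaL n \<beta> t g))"
    by (simp add: fun_eq_iff SE_form_def deltaL_def o_def twist_expansion[OF g] mult.assoc)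
qed

lemma deltaL_comp:
  assumes g: "g \<in> Emaps \<iota>" and g': "g' \<in> Emaps \<iota>"
  shows "teq_SE \<iota> (deltaL n \<beta> t (g \<circ> g'))
     (concat (map (\<lambda>(h, x). map (\<lambda>(h', x'). (h \<circ> h', x \<circ> x')) (deltaL n \<beta> t g')) (deltaL n \<beta> t g)))"
    (is "teq_SE \<iota> _ ?prod")
proof -
  have "set ?prod \<subseteq> Smaps \<iota> \<times> Emaps \<iota>"
    using g g' by (auto simp: deltaL_def intro!: Smaps_comp Emaps_comp beta_in_Smaps twist_in_Emaps t_in_Tset)
  moreover have "SE_form ?prod x y = g (g' (x * y))" for x y
  proof -
    have "SE_form ?prod x y
        = (\<Sum>i\<leftarrow>[0..<n]. \<Sum>j\<leftarrow>[0..<n]. twist g (t i) (twist g' (t j) x) * \<beta> i (\<beta> j y))"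
      by (simp add: SE_form_def deltaL_def o_def sum_list_map_concat)
    also have "\<dots> = (\<Sum>j\<leftarrow>[0..<n]. \<Sum>i\<leftarrow>[0..<n]. twist g (t i) (twist g' (t j) x) * \<beta> i (\<beta> j y))"
      by (rule sum_list_swap)
    also have "\<dots> = (\<Sum>j\<leftarrow>[0..<n]. g (twist g' (t j) x * \<beta> j y))"
      by (simp add: twist_expansion[OF g])
    also have "\<dots> = g (g' (x * y))"
      by (simp add: twist_expansion[OF g'] flip: Emaps_sum_list[OF g])
    finally show ?thesis .
  qed
  ultimately show ?thesis
    using teq_SE_deltaL_iff[OF Emaps_comp[OF g g']] by simp
qed

lemma deltaL_coassoc:
  assumes c: "c \<in> Emaps \<iota>"
  shows "teq_SSE \<iota>
      (concat (map (\<lambda>(h, x). map (\<lambda>(h1, h2). (h1, h2, x)) (Delta_cop n \<beta> t h)) (deltaL n \<beta> t c)))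
      (concat (map (\<lambda>(h, x). map (\<lambda>(h', x'). (h, h', x')) (deltaL n \<beta> t x)) (deltaL n \<beta> t c)))"
    (is "teq_SSE \<iota> ?lhs ?rhs")
proof (rule teq_SSE_if_SSE_form_eq)
  show "set ?lhs \<subseteq> Smaps \<iota> \<times> Smaps \<iota> \<times> Emaps \<iota>"
    using c by (auto simp: deltaL_def Delta_cop_def beta_in_Smaps twist_in_Smaps twist_in_Emaps t_in_Tset)
  show "set ?rhs \<subseteq> Smaps \<iota> \<times> Smaps \<iota> \<times> Emaps \<iota>"
    using c by (auto simp: deltaL_def beta_in_Smaps twist_in_Emaps t_in_Tset)
  have "SSE_form ?lhs x y w = c (x * (y * w))" for x y w
  proof -
    have "SSE_form ?lhs x y w
        = (\<Sum>i\<leftarrow>[0..<n]. twist c (t i) x * (\<Sum>j\<leftarrow>[0..<n]. twist (\<beta> i) (t j) y * \<beta> j w))"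
      by (simp add: SSE_form_def deltaL_def Delta_cop_def o_def sum_list_map_concat mult.assoc
          flip: sum_list_const_mult)
    also have "\<dots> = (\<Sum>i\<leftarrow>[0..<n]. twist c (t i) x * \<beta> i (y * w))"
      by (intro arg_cong[where f = sum_list] map_cong) (simp_all add: twist_expansion beta_in_Emaps)
    also have "\<dots> = c (x * (y * w))"
      by (rule twist_expansion[OF c])
    finally show ?thesis .
  qed
  moreover have "SSE_form ?rhs x y w = c (x * y * w)" for x y w
  proof -
    have "SSE_form ?rhs x y w
        = (\<Sum>i\<leftarrow>[0..<n]. (\<Sum>j\<leftarrow>[0..<n]. twist (twist c (t i)) (t j) x * \<beta> j y) * \<beta> i w)"
      by (simp add: SSE_form_def deltaL_def o_def sum_list_map_concat flip: sum_list_mult_const)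
    also have "\<dots> = (\<Sum>i\<leftarrow>[0..<n]. twist c (t i) (x * y) * \<beta> i w)"
      using c by (intro arg_cong[where f = sum_list] map_cong)
        (simp_all add: twist_expansion twist_in_Emaps t_in_Tset)
    also have "\<dots> = c (x * y * w)"
      by (rule twist_expansion[OF c])
    finally show ?thesis .
  qed
  ultimately show "SSE_form ?lhs = SSE_form ?rhs"
    by (simp add: fun_eq_iff mult.assoc)
qed

lemma deltaL_counit: "g \<in> Emaps \<iota> \<Longrightarrow> (\<Sum>(h, x)\<leftarrow>deltaL n \<beta> t g. rho (h 1) \<circ> x) = g"
  by (simp add: fun_eq_iff sum_list_apply deltaL_def o_def twist_expansion)

lemma left_comodule_algebra_deltaL:
  "left_comodule_algebra (Smaps \<iota>) (\<circ>) id rho lam (Delta_cop n \<beta> t) (\<lambda>\<alpha>. \<alpha> 1)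
     (centralizer \<iota>) (\<lambda>r r'. r' * r) 1 (Emaps \<iota>) (\<circ>) id rho (deltaL n \<beta> t)"
  unfolding left_comodule_algebra_def teqHC_def
  using deltaL_in_SE deltaL_id deltaL_target_balanced deltaL_comp deltaL_coassoc deltaL_counit
  by (auto simp: rho_in_Emaps rho_mult fun_eq_iff distrib_left)

definition galois_map :: "(('a \<Rightarrow> 'a) \<times> ('a \<Rightarrow> 'a)) list \<Rightarrow> (('a \<Rightarrow> 'a) \<times> ('a \<Rightarrow> 'a)) list" where
  "galois_map xs = concat (map (\<lambda>(c, c'). map (\<lambda>(h, x). (h, x \<circ> c')) (deltaL n \<beta> t c)) xs)"

lemma galois_map_in_SE:
  assumes "set xs \<subseteq> Emaps \<iota> \<times> Emaps \<iota>"
  shows "set (galois_map xs) \<subseteq> Smaps \<iota> \<times> Emaps \<iota>"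
proof -
  have "twist c (t k) \<circ> c' \<in> Emaps \<iota>" if "(c, c') \<in> set xs" "k < n" for c c' k
    using that assms by (intro Emaps_comp twist_in_Emaps t_in_Tset) auto
  then show ?thesis
    by (auto simp: galois_map_def deltaL_def beta_in_Smaps comp_def)
qed

lemma SE_form_galois_map:
  assumes xs: "set xs \<subseteq> Emaps \<iota> \<times> Emaps \<iota>"
  shows "SE_form (galois_map xs) = EE_form xs"
proof (intro ext)
  fix x y
  have "SE_form (galois_map xs) x y = (\<Sum>q\<leftarrow>xs. \<Sum>k\<leftarrow>[0..<n]. twist (fst q) (t k) (snd q x) * \<beta> k y)"
    by (simp add: SE_form_def galois_map_def deltaL_def sum_list_map_concat o_def case_prod_unfold)
  also have "\<dots> = (\<Sum>q\<leftarrow>xs. fst q (snd q x * y))"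
    using xs by (intro arg_cong[where f = sum_list] map_cong) (auto simp: twist_expansion)
  finally show "SE_form (galois_map xs) x y = EE_form xs x y"
    by (simp add: EE_form_def case_prod_unfold)
qed

lemma left_Galois_deltaL:
  "left_Galois (Smaps \<iota>) (\<circ>) id rho lam (Delta_cop n \<beta> t) (\<lambda>\<alpha>. \<alpha> 1) (centralizer \<iota>) (\<lambda>r r'. r' * r) 1
     (Emaps \<iota>) (\<circ>) id rho (deltaL n \<beta> t)"
  unfolding left_Galois_def Let_def coinvariants_deltaL teqHC_def galois_map_def[symmetric]
proof (intro conjI ballI left_comodule_algebra_deltaL)
  fix xs ys assume "xs \<in> lists (Emaps \<iota> \<times> Emaps \<iota>)" "ys \<in> lists (Emaps \<iota> \<times> Emaps \<iota>)"
  then have xs: "set xs \<subseteq> Emaps \<iota> \<times> Emaps \<iota>" and ys: "set ys \<subseteq> Emaps \<iota> \<times> Emaps \<iota>" by auto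
  have "teq_EE \<iota> xs ys \<longleftrightarrow> EE_form xs = EE_form ys"
    by (rule teq_EE_iff_EE_form_eq[OF xs ys])
  also have "\<dots> \<longleftrightarrow> SE_form (galois_map xs) = SE_form (galois_map ys)"
    by (simp add: SE_form_galois_map xs ys)
  also have "\<dots> \<longleftrightarrow> teq_SE \<iota> (galois_map xs) (galois_map ys)"
    by (rule teq_SE_iff_SE_form_eq[symmetric, OF galois_map_in_SE[OF xs] galois_map_in_SE[OF ys]])
  finally show "teq_EE \<iota> xs ys \<longleftrightarrow> teq_SE \<iota> (galois_map xs) (galois_map ys)" .
next
  fix zs assume "zs \<in> lists (Smaps \<iota> \<times> Emaps \<iota>)"
  then have zs: "set zs \<subseteq> Smaps \<iota> \<times> Emaps \<iota>" by auto
  let ?xs = "EE_of_form (SE_form zs)"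
  have xs: "set ?xs \<subseteq> Emaps \<iota> \<times> Emaps \<iota>"
    by (rule EE_of_form_in_Emaps[OF balanced_form_SE_form[OF zs]])
  have "SE_form (galois_map ?xs) = SE_form zs"
    by (simp add: SE_form_galois_map[OF xs] EE_form_EE_of_form balanced_form_SE_form[OF zs])
  then have "teq_SE \<iota> (galois_map ?xs) zs"
    using teq_SE_iff_SE_form_eq[OF galois_map_in_SE[OF xs] zs] by simp
  then show "\<exists>xs\<in>lists (Emaps \<iota> \<times> Emaps \<iota>). teq_SE \<iota> (galois_map xs) zs"
    using xs by auto
qed

section \<open>Left D2 and left balanced\<close>

definition EE_to_Cpow :: "(('a \<Rightarrow> 'a) \<times> ('a \<Rightarrow> 'a)) list \<Rightarrow> nat \<Rightarrow> 'a \<Rightarrow> 'a" where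
  "EE_to_Cpow xs = (\<lambda>i. if i < n then contract (EE_form xs) (t i) else 0)"

definition Cpow_to_EE :: "(nat \<Rightarrow> 'a \<Rightarrow> 'a) \<Rightarrow> (('a \<Rightarrow> 'a) \<times> ('a \<Rightarrow> 'a)) list" where
  "Cpow_to_EE v = EE_of_form (SE_form (map (\<lambda>i. (\<beta> i, v i)) [0..<n]))"

lemma EE_to_Cpow_in_Cpow: "set xs \<subseteq> Emaps \<iota> \<times> Emaps \<iota> \<Longrightarrow> EE_to_Cpow xs \<in> Cpow (Emaps \<iota>) n"
  by (simp add: Cpow_def EE_to_Cpow_def contract_in_Emaps balanced_form_EE_form t_in_Tset)

lemma EE_to_Cpow_expansion:
  assumes "set xs \<subseteq> Emaps \<iota> \<times> Emaps \<iota>"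
  shows "(\<Sum>i\<leftarrow>[0..<n]. EE_to_Cpow xs i x * \<beta> i u) = EE_form xs x u"
proof -
  have "(\<Sum>i\<leftarrow>[0..<n]. EE_to_Cpow xs i x * \<beta> i u) = (\<Sum>i\<leftarrow>[0..<n]. contract (EE_form xs) (t i) x * \<beta> i u)"
    by (rule sum_list_upt_cong) (simp add: EE_to_Cpow_def)
  also have "\<dots> = EE_form xs x u"
    by (rule balanced_form_expansion[OF balanced_form_EE_form[OF assms]])
  finally show ?thesis .
qed

lemma balanced_form_SE_form_Cpow:
  "v \<in> Cpow (Emaps \<iota>) n \<Longrightarrow> balanced_form \<iota> (SE_form (map (\<lambda>i. (\<beta> i, v i)) [0..<n]))"
  by (rule balanced_form_SE_form) (auto simp: Cpow_def beta_in_Smaps)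

lemma Cpow_to_EE_in_Emaps: "v \<in> Cpow (Emaps \<iota>) n \<Longrightarrow> set (Cpow_to_EE v) \<subseteq> Emaps \<iota> \<times> Emaps \<iota>"
  by (simp add: Cpow_to_EE_def EE_of_form_in_Emaps balanced_form_SE_form_Cpow)

lemma EE_form_Cpow_to_EE:
  "v \<in> Cpow (Emaps \<iota>) n \<Longrightarrow> EE_form (Cpow_to_EE v) = (\<lambda>x u. \<Sum>i\<leftarrow>[0..<n]. v i x * \<beta> i u)"
  by (simp add: Cpow_to_EE_def EE_form_EE_of_form balanced_form_SE_form_Cpow)
     (simp add: SE_form_def o_def)

lemma teq_EE_Cpow_to_EE:
  assumes "v \<in> Cpow (Emaps \<iota>) n" and "set xs \<subseteq> Emaps \<iota> \<times> Emaps \<iota>"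
    and "\<And>x u. EE_form xs x u = (\<Sum>i\<leftarrow>[0..<n]. v i x * \<beta> i u)"
  shows "teq_EE \<iota> (Cpow_to_EE v) xs"
  using assms by (simp add: teq_EE_iff_EE_form_eq Cpow_to_EE_in_Emaps EE_form_Cpow_to_EE fun_eq_iff)

lemma EE_to_Cpow_append: "EE_to_Cpow (xs @ ys) = EE_to_Cpow xs + EE_to_Cpow ys"
  by (simp add: EE_to_Cpow_def EE_form_append contract_add fun_eq_iff)

lemma EE_to_Cpow_eq_if_teq_EE: "teq_EE \<iota> xs ys \<Longrightarrow> EE_to_Cpow xs = EE_to_Cpow ys"
  unfolding EE_to_Cpow_def by (simp only: EE_form_eq_if_teq_EE)

lemma EE_to_Cpow_map_left:
  "i < n \<Longrightarrow> EE_to_Cpow (map (\<lambda>(x, y). (lam a \<circ> x, y)) xs) i = lam a \<circ> EE_to_Cpow xs i"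
  unfolding EE_to_Cpow_def EE_form_map_left
  by (simp add: contract_def fun_eq_iff mult.assoc case_prod_unfold flip: sum_list_const_mult)

lemma EE_to_Cpow_map_right:
  "i < n \<Longrightarrow> EE_to_Cpow (map (\<lambda>(x, y). (x, y \<circ> c)) xs) i = EE_to_Cpow xs i \<circ> c"
  by (simp add: EE_to_Cpow_def EE_form_map_right contract_def fun_eq_iff)

lemma Cpow_to_EE_EE_to_Cpow:
  "set xs \<subseteq> Emaps \<iota> \<times> Emaps \<iota> \<Longrightarrow> teq_EE \<iota> (Cpow_to_EE (EE_to_Cpow xs)) xs"
  by (rule teq_EE_Cpow_to_EE[OF EE_to_Cpow_in_Cpow]) (simp_all add: EE_to_Cpow_expansion)

lemma Cpow_to_EE_add:
  assumes v: "v \<in> Cpow (Emaps \<iota>) n" and w: "w \<in> Cpow (Emaps \<iota>) n"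
  shows "teq_EE \<iota> (Cpow_to_EE (v + w)) (Cpow_to_EE v @ Cpow_to_EE w)"
  using v w by (intro teq_EE_Cpow_to_EE)
    (auto simp: Cpow_def Emaps_plus Cpow_to_EE_in_Emaps EE_form_append EE_form_Cpow_to_EE
      distrib_right sum_list_addf)

lemma Cpow_to_EE_map_left:
  assumes v: "v \<in> Cpow (Emaps \<iota>) n"
  shows "teq_EE \<iota> (Cpow_to_EE (\<lambda>i. if i < n then lam a \<circ> v i else 0))
           (map (\<lambda>(x, y). (lam a \<circ> x, y)) (Cpow_to_EE v))"
proof (rule teq_EE_Cpow_to_EE)
  show "(\<lambda>i. if i < n then lam a \<circ> v i else 0) \<in> Cpow (Emaps \<iota>) n"
    using v by (simp add: Cpow_def Emaps_comp lam_in_Emaps)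
  show "set (map (\<lambda>(x, y). (lam a \<circ> x, y)) (Cpow_to_EE v)) \<subseteq> Emaps \<iota> \<times> Emaps \<iota>"
    using Cpow_to_EE_in_Emaps[OF v] by (auto intro: Emaps_comp lam_in_Emaps)
  show "EE_form (map (\<lambda>(x, y). (lam a \<circ> x, y)) (Cpow_to_EE v)) x u
      = (\<Sum>i\<leftarrow>[0..<n]. (if i < n then lam a \<circ> v i else 0) x * \<beta> i u)" for x u
    unfolding EE_form_map_left EE_form_Cpow_to_EE[OF v] sum_list_const_mult[symmetric]
    by (rule sum_list_upt_cong) (simp add: mult.assoc)
qed

lemma Cpow_to_EE_map_right:
  assumes v: "v \<in> Cpow (Emaps \<iota>) n" and c: "c \<in> Emaps \<iota>"
  shows "teq_EE \<iota> (Cpow_to_EE (\<lambda>i. if i < n then v i \<circ> c else 0))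
           (map (\<lambda>(x, y). (x, y \<circ> c)) (Cpow_to_EE v))"
proof (rule teq_EE_Cpow_to_EE)
  show "(\<lambda>i. if i < n then v i \<circ> c else 0) \<in> Cpow (Emaps \<iota>) n"
    using v c by (simp add: Cpow_def Emaps_comp)
  show "set (map (\<lambda>(x, y). (x, y \<circ> c)) (Cpow_to_EE v)) \<subseteq> Emaps \<iota> \<times> Emaps \<iota>"
    using Cpow_to_EE_in_Emaps[OF v] c by (auto intro: Emaps_comp)
  show "EE_form (map (\<lambda>(x, y). (x, y \<circ> c)) (Cpow_to_EE v)) x u
      = (\<Sum>i\<leftarrow>[0..<n]. (if i < n then v i \<circ> c else 0) x * \<beta> i u)" for x u
    unfolding EE_form_map_right EE_form_Cpow_to_EE[OF v]
    by (rule sum_list_upt_cong) simp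
qed

lemma left_D2_Emaps: "left_D2 (Emaps \<iota>) (\<circ>) (range lam)"
  unfolding left_D2_def
proof (intro exI[of _ n] exI[of _ EE_to_Cpow] exI[of _ Cpow_to_EE] conjI ballI allI impI)
  fix xs :: "(('a \<Rightarrow> 'a) \<times> ('a \<Rightarrow> 'a)) list" assume "xs \<in> lists (Emaps \<iota> \<times> Emaps \<iota>)"
  then have xs: "set xs \<subseteq> Emaps \<iota> \<times> Emaps \<iota>" by auto
  then show "EE_to_Cpow xs \<in> Cpow (Emaps \<iota>) n" and "teq_EE \<iota> (Cpow_to_EE (EE_to_Cpow xs)) xs"
    by (rule EE_to_Cpow_in_Cpow, rule Cpow_to_EE_EE_to_Cpow)
next
  fix v assume "v \<in> Cpow (Emaps \<iota>) n"
  then show "Cpow_to_EE v \<in> lists (Emaps \<iota> \<times> Emaps \<iota>)"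
    using Cpow_to_EE_in_Emaps by auto
qed (auto simp: EE_to_Cpow_append EE_to_Cpow_eq_if_teq_EE EE_to_Cpow_map_left EE_to_Cpow_map_right
    Cpow_to_EE_add Cpow_to_EE_map_left Cpow_to_EE_map_right)

end

lemma Emaps_left_balanced: "left_balanced (Emaps \<iota>) (\<circ>) (range lam)"
  unfolding left_balanced_def
proof (intro allI impI)
  fix \<phi> :: "('a \<Rightarrow> 'a) \<Rightarrow> 'a \<Rightarrow> 'a"
  assume "(\<forall>c\<in>Emaps \<iota>. \<phi> c \<in> Emaps \<iota>) \<and> additive_on (Emaps \<iota>) \<phi> \<and>
      (\<forall>\<psi>\<in>End_left (Emaps \<iota>) (\<circ>) (range lam). \<forall>c\<in>Emaps \<iota>. \<phi> (\<psi> c) = \<psi> (\<phi> c))"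
  then have commutes: "\<phi> (\<psi> id) = \<psi> (\<phi> id)" if "\<psi> \<in> End_left (Emaps \<iota>) (\<circ>) (range lam)" for \<psi>
    using that id_in_Emaps by blast
  show "\<exists>d\<in>range lam. \<forall>c\<in>Emaps \<iota>. \<phi> c = d \<circ> c"
  proof (intro bexI ballI)
    fix c assume c: "c \<in> Emaps \<iota>"
    let ?\<psi> = "\<lambda>e. lam (e 1) \<circ> c"
    have "?\<psi> \<in> End_left (Emaps \<iota>) (\<circ>) (range lam)"
      using c by (auto simp: End_left_def additive_on_def fun_eq_iff distrib_right mult.assoc
          intro!: Emaps_comp lam_in_Emaps)
    then show "\<phi> c = lam (\<phi> id 1) \<circ> c"
      using commutes[of ?\<psi>] by (simp add: comp_def)
  qed simp
qed

theorem corollary5p3: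
  fixes \<iota> :: "'b::ring_1 \<Rightarrow> 'a::ring_1"
    and uA :: "'k::comm_ring_1 \<Rightarrow> 'a" and uB :: "'k \<Rightarrow> 'b"
    and n :: nat and \<beta> :: "nat \<Rightarrow> 'a \<Rightarrow> 'a" and t :: "nat \<Rightarrow> ('a \<times> 'a) list"
  assumes "alg_struct uA" and "alg_struct uB" and "unital_hom \<iota>" and "\<forall>k. \<iota> (uB k) = uA k"
    and "left_D2 (UNIV :: 'a set) (*) (range \<iota>)"
    and "left_D2_quasibase \<iota> n \<beta> t"
  shows "left_D2 (Emaps \<iota>) (\<circ>) (range lam)
    \<and> left_balanced (Emaps \<iota>) (\<circ>) (range lam)
    \<and> left_Galois (Smaps \<iota>) (\<circ>) id rho lam (Delta_cop n \<beta> t) (\<lambda>\<alpha>. \<alpha> 1)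
         (centralizer \<iota>) (\<lambda>r r'. r' * r) 1
         (Emaps \<iota>) (\<circ>) id rho (deltaL n \<beta> t)
    \<and> coinvariants (Smaps \<iota>) (\<circ>) id lam (centralizer \<iota>) (Emaps \<iota>) (\<circ>) rho (deltaL n \<beta> t)
        = range lam"
proof -
  interpret D2_quasibase \<iota> n \<beta> t
    by (rule D2_quasibase.intro) (rule assms(6))
  show ?thesis
    using left_D2_Emaps Emaps_left_balanced left_Galois_deltaL coinvariants_deltaL by blast
qed

end
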